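(* Let $r\ge 2$ and $g,h\ge 0$ be integers with $g+h\ge 1$. Then the graph $gK_{r+1}\cup h(K_{r+1,r+1}\setminus F)$ is determined by its $Q$-spectrum (DQS). In particular, $K_{r+1}$ and $K_{r+1,r+1}\setminus F$ are DQS.
   Context: All graphs are finite, simple and undirected. $Q(G)=D(G)+A(G)$ is the signless Laplacian matrix (degree diagonal matrix plus adjacency matrix), and $\mathrm{Spec}_Q(G)$ is the multiset of its eigenvalues. A graph $G$ is DQS if every graph $H$ with $\mathrm{Spec}_Q(H)=\mathrm{Spec}_Q(G)$ is isomorphic to $G$. $K_{r+1,r+1}\setminus F$ denotes the graph obtained from $K_{r+1,r+1}$ by deleting the edges of a perfect matching $F$; $kH$ is the disjoint union of $k$ copies of $H$ and $\cup$ is disjoint union. *)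

theory Defs
  imports "Jordan_Normal_Form.Char_Poly" "HOL-Computational_Algebra.Polynomial"
begin

text \<open>A finite simple graph with n vertices is represented on the vertex set {0..<n}
  by a pair (n, E) with an edge relation E; only E restricted to {0..<n} matters.\<close>

type_synonym graph = "nat \<times> (nat \<Rightarrow> nat \<Rightarrow> bool)"

definition nverts :: "graph \<Rightarrow> nat" where "nverts G = fst G"
definition adj :: "graph \<Rightarrow> nat \<Rightarrow> nat \<Rightarrow> bool" where "adj G = snd G"

definition simple_graph :: "graph \<Rightarrow> bool" where
  "simple_graph G \<longleftrightarrow>
     (\<forall>i j. adj G i j \<longrightarrow> i < nverts G \<and> j < nverts G) \<and>
     (\<forall>i. \<not> adj G i i) \<and> (\<forall>i j. adj G i j \<longrightarrow> adj G j i)"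

definition degree :: "graph \<Rightarrow> nat \<Rightarrow> nat" where
  "degree G i = card {j. j < nverts G \<and> adj G i j}"

definition signless_laplacian :: "graph \<Rightarrow> complex mat" where
  "signless_laplacian G = mat (nverts G) (nverts G)
     (\<lambda>(i, j). (if i = j then of_nat (degree G i) else 0) + (if adj G i j then 1 else 0))"

definition spec_Q :: "graph \<Rightarrow> complex multiset" where
  "spec_Q G = proots (char_poly (signless_laplacian G))"

definition isomorphic :: "graph \<Rightarrow> graph \<Rightarrow> bool" where
  "isomorphic G H \<longleftrightarrow> (\<exists>f. bij_betw f {0..<nverts G} {0..<nverts H} \<and>
     (\<forall>i<nverts G. \<forall>j<nverts G. adj G i j \<longleftrightarrow> adj H (f i) (f j)))"

definition DQS :: "graph \<Rightarrow> bool" where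
  "DQS G \<longleftrightarrow> (\<forall>H. simple_graph H \<longrightarrow> spec_Q H = spec_Q G \<longrightarrow> isomorphic H G)"

definition disjoint_union :: "graph \<Rightarrow> graph \<Rightarrow> graph" where
  "disjoint_union G H = (nverts G + nverts H,
     \<lambda>i j. (i < nverts G \<and> j < nverts G \<and> adj G i j) \<or>
           (nverts G \<le> i \<and> nverts G \<le> j \<and> adj H (i - nverts G) (j - nverts G)))"

definition empty_graph :: graph where "empty_graph = (0, \<lambda>_ _. False)"

fun copies :: "nat \<Rightarrow> graph \<Rightarrow> graph" where
  "copies 0 H = empty_graph"
| "copies (Suc k) H = disjoint_union (copies k H) H"

definition complete_graph :: "nat \<Rightarrow> graph" where
  "complete_graph n = (n, \<lambda>i j. i < n \<and> j < n \<and> i \<noteq> j)"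

text \<open>K_{m,m} minus the perfect matching F = {(i, m+i) | i<m}: sides {0..<m}
  and {m..<2m}; i and m+j adjacent iff i \<noteq> j.  (All perfect matchings give
  isomorphic graphs.)\<close>
definition crown_graph :: "nat \<Rightarrow> graph" where
  "crown_graph m = (2 * m, \<lambda>i j. i < 2 * m \<and> j < 2 * m \<and>
      ((i < m \<and> m \<le> j \<and> j - m \<noteq> i) \<or> (j < m \<and> m \<le> i \<and> i - m \<noteq> j)))"

end

theory Submission
  imports Defs "Jordan_Normal_Form.Schur_Decomposition"
begin

text \<open>Cospectral graphs have equal traces of every polynomial in Q. The traces of Q and Q^2
  force a graph H cospectral with the r-regular graph G to be r-regular, so that Q - r I is its
  adjacency matrix A. The polynomial p(x) = (x - r - 1)(x - r + 1)(x - 2r)x annihilates Q(G), and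
  p(Q(H)) = (A^2 - I)(A^2 - r^2 I) is symmetric with trace of its square equal to that for G,
  namely 0; hence p(Q(H)) = 0. Then M = A^2 - I satisfies M^2 = (r^2 - 1) M, which forces
  "having a common neighbour" to be an equivalence relation whose classes (blocks) have r + 1
  elements, two vertices of a block having r - 1 common neighbours. The neighbours of a vertex
  fill all but one vertex of a single block: either its own block, which then spans a K_(r+1),
  or a second block, which together with its own one spans a K_(r+1,r+1) minus a perfect
  matching. Finally the trace of A^3 counts the vertices of the K_(r+1) components, so H has g of
  them and h crowns.\<close>

section \<open>Traces of polynomials in a matrix\<close>

lemma sum_eq_single:
  assumes "finite A" "i \<in> A" "\<And>k. k \<in> A \<Longrightarrow> k \<noteq> i \<Longrightarrow> g k = (0::'b::comm_monoid_add)"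
  shows "sum g A = g i"
proof -
  have "sum g A = g i + sum g (A - {i})" using assms by (simp add: sum.remove)
  also have "sum g (A - {i}) = 0" using assms by (intro sum.neutral) auto
  finally show ?thesis by simp
qed

lemma sum_if_card:
  "(\<Sum>k<(n::nat). if P k then c else 0) = of_nat (card {k. k < n \<and> P k}) * (c::'a::semiring_1)"
proof -
  have "(\<Sum>k<n. if P k then c else 0) = (\<Sum>k\<in>{k\<in>{..<n}. P k}. c)"
    by (rule sum.inter_filter[symmetric]) simp
  also have "{k\<in>{..<n}. P k} = {k. k < n \<and> P k}" by auto
  finally show ?thesis by simp
qed

lemma sum_delta_right:
  "j < (n::nat) \<Longrightarrow> (\<Sum>k<n. f k * (if k = j then c else 0)) = f j * (c::'a::semiring_1)"
  by (subst sum_eq_single[of _ j]) auto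

lemma sum_delta_left:
  "i < (n::nat) \<Longrightarrow> (\<Sum>k<n. (if i = k then c else 0) * f k) = c * (f i::'a::semiring_1)"
  by (subst sum_eq_single[of _ i]) auto

definition mat_trace :: "'a::comm_ring_1 mat \<Rightarrow> 'a" where
  "mat_trace M = (\<Sum>i<dim_row M. M $$ (i, i))"

definition shifted_prod :: "'a::comm_ring_1 mat \<Rightarrow> nat \<Rightarrow> 'a list \<Rightarrow> 'a mat" where
  "shifted_prod A n as = foldr (\<lambda>a M. (A - a \<cdot>\<^sub>m 1\<^sub>m n) * M) as (1\<^sub>m n)"

lemma shifted_prod_Nil [simp]: "shifted_prod A n [] = 1\<^sub>m n"
  by (simp add: shifted_prod_def)

lemma shifted_prod_Cons: "shifted_prod A n (a # as) = (A - a \<cdot>\<^sub>m 1\<^sub>m n) * shifted_prod A n as"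
  by (simp add: shifted_prod_def)

lemma shifted_mat_carrier [simp]: "A \<in> carrier_mat n n \<Longrightarrow> A - a \<cdot>\<^sub>m 1\<^sub>m n \<in> carrier_mat n n"
  by (simp add: minus_carrier_mat)

lemma shifted_prod_carrier: "A \<in> carrier_mat n n \<Longrightarrow> shifted_prod A n as \<in> carrier_mat n n"
  by (induction as) (auto simp: shifted_prod_Cons)

lemma shifted_prod_append:
  assumes A: "A \<in> carrier_mat n n"
  shows "shifted_prod A n (as @ bs) = shifted_prod A n as * shifted_prod A n bs"
proof (induction as)
  case Nil
  then show ?case using left_mult_one_mat[OF shifted_prod_carrier[OF A]] by simp
next
  case (Cons a as)
  then show ?case
    using A shifted_prod_carrier[OF A]
    by (simp add: shifted_prod_Cons assoc_mult_mat[of _ n n _ n _ n])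
qed

lemma shifted_prod_single: "A \<in> carrier_mat n n \<Longrightarrow> shifted_prod A n [a] = A - a \<cdot>\<^sub>m 1\<^sub>m n"
  by (simp add: shifted_prod_Cons)

lemma shifted_prod_pair:
  "A \<in> carrier_mat n n \<Longrightarrow> shifted_prod A n [a, b] = (A - a \<cdot>\<^sub>m 1\<^sub>m n) * (A - b \<cdot>\<^sub>m 1\<^sub>m n)"
  by (simp add: shifted_prod_Cons[of A n a "[b]"] shifted_prod_single)

lemma minus_zero_smult_one: "A \<in> carrier_mat n n \<Longrightarrow> A - (0::'a::comm_ring_1) \<cdot>\<^sub>m 1\<^sub>m n = A"
  by (rule eq_matI) auto

lemma index_mult_mat_sum:
  "M \<in> carrier_mat n k \<Longrightarrow> N \<in> carrier_mat k m \<Longrightarrow> i < n \<Longrightarrow> j < m \<Longrightarrow>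
   (M * N) $$ (i, j) = (\<Sum>l<k. M $$ (i, l) * N $$ (l, j))"
  by (simp add: scalar_prod_def row_def col_def atLeast0LessThan)

lemma mat_trace_mult_comm:
  assumes "X \<in> carrier_mat n k" "Y \<in> carrier_mat k n"
  shows "mat_trace (X * Y) = mat_trace (Y * X)"
proof -
  have "mat_trace (X * Y) = (\<Sum>i<n. \<Sum>j<k. X $$ (i, j) * Y $$ (j, i))"
    using assms by (simp add: mat_trace_def scalar_prod_def row_def col_def atLeast0LessThan)
  also have "\<dots> = (\<Sum>j<k. \<Sum>i<n. Y $$ (j, i) * X $$ (i, j))"
    by (subst sum.swap) (simp add: mult.commute)
  also have "\<dots> = mat_trace (Y * X)"
    using assms by (simp add: mat_trace_def scalar_prod_def row_def col_def atLeast0LessThan)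
  finally show ?thesis .
qed

lemma upper_triangular_mult:
  assumes X: "X \<in> carrier_mat n n" and Y: "Y \<in> carrier_mat n n"
    and ux: "upper_triangular X" and uy: "upper_triangular Y"
  shows "upper_triangular (X * Y)"
proof (rule upper_triangularI)
  fix i j assume ji: "j < i" and i: "i < dim_row (X * Y)"
  have "X $$ (i, k) * Y $$ (k, j) = 0" if k: "k < n" for k
  proof (cases "k < i")
    case True
    then show ?thesis using upper_triangularD[OF ux True] X i by auto
  next
    case False
    then have "j < k" using ji by auto
    then show ?thesis using upper_triangularD[OF uy] Y k by auto
  qed
  then show "(X * Y) $$ (i, j) = 0"
    using X Y i ji by (subst index_mult_mat_sum[OF X Y]) auto
qed

lemma diag_mult_upper_triangular:
  assumes X: "X \<in> carrier_mat n n" and Y: "Y \<in> carrier_mat n n"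
    and ux: "upper_triangular X" and uy: "upper_triangular Y" and i: "i < n"
  shows "(X * Y) $$ (i, i) = X $$ (i, i) * Y $$ (i, i)"
proof -
  have "X $$ (i, k) * Y $$ (k, i) = 0" if k: "k < n" "k \<noteq> i" for k
  proof (cases "k < i")
    case True
    then show ?thesis using upper_triangularD[OF ux True] X i by auto
  next
    case False
    then have "i < k" using k by auto
    then show ?thesis using upper_triangularD[OF uy] Y k by auto
  qed
  then show ?thesis
    using i by (subst index_mult_mat_sum[OF X Y]) (auto intro: sum_eq_single)
qed

lemma shifted_prod_upper_triangular:
  assumes B: "B \<in> carrier_mat n n" and "upper_triangular B"
  shows "upper_triangular (shifted_prod B n as) \<and>
    (\<forall>i<n. shifted_prod B n as $$ (i, i) = (\<Prod>a\<leftarrow>as. B $$ (i, i) - a))"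
proof (induction as)
  case (Cons a as)
  have C: "B - a \<cdot>\<^sub>m 1\<^sub>m n \<in> carrier_mat n n" using B by simp
  have U: "upper_triangular (B - a \<cdot>\<^sub>m 1\<^sub>m n)"
    using assms by (auto simp: upper_triangular_def)
  show ?case
    using Cons B upper_triangular_mult[OF C shifted_prod_carrier[OF B] U]
      diag_mult_upper_triangular[OF C shifted_prod_carrier[OF B] U]
    by (simp add: shifted_prod_Cons)
qed simp

lemma shifted_prod_similar:
  assumes "similar_mat_wit A B P Q" and A: "A \<in> carrier_mat n n"
  shows "shifted_prod A n as = P * shifted_prod B n as * Q"
proof -
  have B: "B \<in> carrier_mat n n" and P: "P \<in> carrier_mat n n" and Q: "Q \<in> carrier_mat n n"
    and PQ: "P * Q = 1\<^sub>m n" and QP: "Q * P = 1\<^sub>m n" and APBQ: "A = P * B * Q"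
    using similar_mat_witD2[OF A assms(1)] by auto
  have shift: "A - a \<cdot>\<^sub>m 1\<^sub>m n = P * (B - a \<cdot>\<^sub>m 1\<^sub>m n) * Q" for a
  proof -
    have "P * (B - a \<cdot>\<^sub>m 1\<^sub>m n) = P * B - a \<cdot>\<^sub>m P"
      using P B by (simp add: mult_minus_distrib_mat mult_smult_distrib[OF P one_carrier_mat])
    then have "P * (B - a \<cdot>\<^sub>m 1\<^sub>m n) * Q = P * B * Q - (a \<cdot>\<^sub>m P) * Q"
      using P B Q by (simp add: minus_mult_distrib_mat[of _ n n])
    also have "(a \<cdot>\<^sub>m P) * Q = a \<cdot>\<^sub>m 1\<^sub>m n"
      using P Q PQ by (simp add: mult_smult_assoc_mat[OF P Q])
    finally show ?thesis using APBQ by simp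
  qed
  show ?thesis
  proof (induction as)
    case Nil
    then show ?case using PQ P by simp
  next
    case (Cons a as)
    have "shifted_prod A n (a # as) = P * (B - a \<cdot>\<^sub>m 1\<^sub>m n) * Q * (P * shifted_prod B n as * Q)"
      using Cons shift by (simp add: shifted_prod_Cons)
    also have "\<dots> = P * ((B - a \<cdot>\<^sub>m 1\<^sub>m n) * (Q * P) * shifted_prod B n as) * Q"
      using P Q shifted_prod_carrier[OF B, of as] shifted_mat_carrier[OF B, of a]
      by (simp add: assoc_mult_mat[of _ n n _ n _ n])
    finally show ?case
      using QP B by (simp add: shifted_prod_Cons)
  qed
qed

lemma proots_prod_linear_factors: "proots (\<Prod>a\<leftarrow>es. [:- a, 1:]) = mset (es :: complex list)"
proof (induction es)
  case (Cons e es)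
  have "(\<Prod>a\<leftarrow>es. [:- a, 1:]) \<noteq> 0" by (auto simp: prod_list_zero_iff)
  then have "proots ([:- e, 1:] * (\<Prod>a\<leftarrow>es. [:- a, 1:])) =
      proots [:- e, 1:] + proots (\<Prod>a\<leftarrow>es. [:- a, 1:])"
    by (intro proots_mult) auto
  then show ?case using Cons proots_linear_factor[of "- e"] by simp
qed simp

theorem mat_trace_shifted_prod_eigenvalues:
  assumes A: "(A :: complex mat) \<in> carrier_mat n n"
  shows "mat_trace (shifted_prod A n as) = (\<Sum>x\<in>#proots (char_poly A). \<Prod>a\<leftarrow>as. x - a)"
proof -
  obtain es where ces: "char_poly A = (\<Prod>a\<leftarrow>es. [:- a, 1:])" and les: "length es = n"
    using char_poly_factorized[OF A] by blast
  obtain B P Q where sd: "schur_decomposition A es = (B, P, Q)"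
    by (cases "schur_decomposition A es") auto
  from schur_decomposition[OF A ces sd] have sim: "similar_mat_wit A B P Q"
    and ub: "upper_triangular B" and db: "diag_mat B = es" by auto
  have B: "B \<in> carrier_mat n n" and P: "P \<in> carrier_mat n n" and Q: "Q \<in> carrier_mat n n"
    and QP: "Q * P = 1\<^sub>m n"
    using similar_mat_witD2[OF A sim] by auto
  have SB: "shifted_prod B n as \<in> carrier_mat n n" by (rule shifted_prod_carrier[OF B])
  have "mat_trace (shifted_prod A n as) = mat_trace (P * (shifted_prod B n as * Q))"
    using shifted_prod_similar[OF sim A] P Q SB by (simp add: assoc_mult_mat[of _ n n _ n _ n])
  also have "\<dots> = mat_trace (shifted_prod B n as * Q * P)"
    using P Q SB by (intro mat_trace_mult_comm[of _ n n]) auto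
  also have "\<dots> = mat_trace (shifted_prod B n as)"
    using P Q SB QP by (simp add: assoc_mult_mat[of _ n n _ n _ n])
  also have "\<dots> = (\<Sum>i<n. \<Prod>a\<leftarrow>as. es ! i - a)"
  proof -
    have "es ! i = B $$ (i, i)" if "i < n" for i
      using that db B by (auto simp: diag_mat_def)
    then show ?thesis
      using shifted_prod_upper_triangular[OF B ub, of as] SB
      unfolding mat_trace_def by (intro sum.cong) auto
  qed
  also have "\<dots> = (\<Sum>x\<in>#mset es. \<Prod>a\<leftarrow>as. x - a)"
    using les by (simp add: sum_mset_sum_list sum_list_sum_nth atLeast0LessThan flip: mset_map)
  finally show ?thesis
    using ces by (simp add: proots_prod_linear_factors)
qed

section \<open>Graphs and their signless Laplacian\<close>

lemma simple_graphD:
  assumes "simple_graph X"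
  shows "\<And>i j. adj X i j \<Longrightarrow> i < nverts X" "\<And>i j. adj X i j \<Longrightarrow> j < nverts X"
    "\<And>i. \<not> adj X i i" "\<And>i j. adj X i j = adj X j i"
  using assms unfolding simple_graph_def by blast+

lemma nverts_disjoint_union [simp]: "nverts (disjoint_union X Y) = nverts X + nverts Y"
  by (simp add: disjoint_union_def nverts_def)

lemma adj_disjoint_union:
  "adj (disjoint_union X Y) i j \<longleftrightarrow>
    (i < nverts X \<and> j < nverts X \<and> adj X i j) \<or>
    (nverts X \<le> i \<and> nverts X \<le> j \<and> adj Y (i - nverts X) (j - nverts X))"
  by (simp add: disjoint_union_def adj_def nverts_def)

lemma simple_disjoint_union:
  assumes "simple_graph X" "simple_graph Y"
  shows "simple_graph (disjoint_union X Y)"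
  using assms unfolding simple_graph_def adj_disjoint_union nverts_disjoint_union by fastforce

lemma simple_empty_graph: "simple_graph empty_graph"
  by (simp add: simple_graph_def empty_graph_def adj_def nverts_def)

lemma simple_copies: "simple_graph X \<Longrightarrow> simple_graph (copies k X)"
  by (induction k) (auto simp: simple_empty_graph simple_disjoint_union)

lemma nverts_complete_graph [simp]: "nverts (complete_graph m) = m"
  by (simp add: complete_graph_def nverts_def)

lemma adj_complete_graph: "adj (complete_graph m) i j \<longleftrightarrow> i < m \<and> j < m \<and> i \<noteq> j"
  by (simp add: complete_graph_def adj_def)

lemma nverts_crown_graph [simp]: "nverts (crown_graph m) = 2 * m"
  by (simp add: crown_graph_def nverts_def)

lemma adj_crown_graph:
  "adj (crown_graph m) i j \<longleftrightarrow> i < 2 * m \<and> j < 2 * m \<and>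
    ((i < m \<and> m \<le> j \<and> j - m \<noteq> i) \<or> (j < m \<and> m \<le> i \<and> i - m \<noteq> j))"
  by (simp add: crown_graph_def adj_def)

lemma simple_complete_graph: "simple_graph (complete_graph m)"
  unfolding simple_graph_def adj_complete_graph by auto

lemma simple_crown_graph: "simple_graph (crown_graph m)"
  unfolding simple_graph_def adj_crown_graph by auto

lemma simple_clique_crown_union:
  "simple_graph (disjoint_union (copies g (complete_graph m)) (copies h (crown_graph m)))"
  by (intro simple_disjoint_union simple_copies simple_complete_graph simple_crown_graph)

definition regular_graph :: "graph \<Rightarrow> nat \<Rightarrow> bool" where
  "regular_graph X r \<longleftrightarrow> (\<forall>i<nverts X. degree X i = r)"

definition common_nbrs :: "graph \<Rightarrow> nat \<Rightarrow> nat \<Rightarrow> nat" where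
  "common_nbrs X i j = card {k. k < nverts X \<and> adj X i k \<and> adj X k j}"

definition closed_walks3 :: "graph \<Rightarrow> nat" where
  "closed_walks3 X = (\<Sum>i<nverts X. \<Sum>k<nverts X. if adj X i k then common_nbrs X k i else 0)"

lemma common_nbrs_sym: "simple_graph X \<Longrightarrow> common_nbrs X i j = common_nbrs X j i"
  unfolding common_nbrs_def by (metis (no_types, lifting) simple_graphD(4))

lemma common_nbrs_diag: "simple_graph X \<Longrightarrow> common_nbrs X i i = degree X i"
  unfolding common_nbrs_def degree_def by (metis (no_types, lifting) simple_graphD(4))

lemma sum_adj_eq_degree:
  "(\<Sum>k<nverts X. if adj X i k then (1::'a::semiring_1) else 0) = of_nat (degree X i)"
  by (simp add: sum_if_card degree_def)

lemma regular_common_nbrs_row_sum: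
  assumes R: "regular_graph X r" and i: "i < nverts X"
  shows "(\<Sum>k<nverts X. common_nbrs X i k) = r * r"
proof -
  let ?n = "nverts X"
  have "(\<Sum>k<?n. common_nbrs X i k) = (\<Sum>k<?n. \<Sum>l<?n. if adj X i l \<and> adj X l k then 1 else 0)"
    unfolding common_nbrs_def by (simp add: sum_if_card)
  also have "\<dots> = (\<Sum>l<?n. \<Sum>k<?n. if adj X i l \<and> adj X l k then 1 else 0)"
    by (rule sum.swap)
  also have "\<dots> = (\<Sum>l<?n. if adj X i l then r else 0)"
    using R by (intro sum.cong refl) (simp add: regular_graph_def sum_adj_eq_degree)
  also have "\<dots> = r * degree X i"
    by (simp add: sum_if_card degree_def)
  finally show ?thesis using R i by (simp add: regular_graph_def)
qed

lemma signless_laplacian_carrier: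
  "signless_laplacian X \<in> carrier_mat (nverts X) (nverts X)"
  by (simp add: signless_laplacian_def)

lemma signless_laplacian_index:
  "i < nverts X \<Longrightarrow> j < nverts X \<Longrightarrow> signless_laplacian X $$ (i, j) =
   (if i = j then of_nat (degree X i) else 0) + (if adj X i j then 1 else 0)"
  by (simp add: signless_laplacian_def)

lemma mat_trace_signless_laplacian:
  assumes "simple_graph X"
  shows "mat_trace (signless_laplacian X) = (\<Sum>i<nverts X. of_nat (degree X i))"
  using simple_graphD[OF assms] signless_laplacian_carrier[of X] unfolding mat_trace_def
  by (intro sum.cong) (auto simp: signless_laplacian_index)

lemma mat_trace_signless_laplacian_square:
  assumes S: "simple_graph X"
  shows "mat_trace (signless_laplacian X * signless_laplacian X) =
    (\<Sum>i<nverts X. of_nat (degree X i) ^ 2 + of_nat (degree X i))"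
  unfolding mat_trace_def
proof (intro sum.cong)
  let ?Q = "signless_laplacian X" and ?n = "nverts X"
  have C: "?Q \<in> carrier_mat ?n ?n" by (rule signless_laplacian_carrier)
  show "{..<dim_row (?Q * ?Q)} = {..<?n}" using C by simp
  fix i assume "i \<in> {..<?n}"
  then have i: "i < ?n" by simp
  have "?Q $$ (i, k) * ?Q $$ (k, i) =
      (if i = k then of_nat (degree X i) ^ 2 else 0)
          + (if adj X i k then 1 else 0)" if "k < ?n" for k
    using i that simple_graphD(3,4)[OF S]
    by (auto simp: signless_laplacian_index power2_eq_square)
  then show "(?Q * ?Q) $$ (i, i) = of_nat (degree X i) ^ 2 + of_nat (degree X i)"
    using i by (simp add: index_mult_mat_sum[OF C C] sum.distrib sum_adj_eq_degree)
qed

lemma regular_shifted_laplacian_index: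
  assumes "regular_graph X r" and "i < nverts X" and "k < nverts X"
  shows "(signless_laplacian X - a \<cdot>\<^sub>m 1\<^sub>m (nverts X)) $$ (i, k) =
    (if adj X i k then 1 else 0) + (if i = k then of_nat r - a else 0)"
  using assms by (simp add: signless_laplacian_index regular_graph_def)

text \<open>For an r-regular graph Q - r I is the adjacency matrix A, so
  (Q - (r + c) I)(Q - (r - c) I) = A^2 - c^2 I.\<close>

lemma regular_shifted_prod_pair_index:
  assumes R: "regular_graph X r" and i: "i < nverts X" and j: "j < nverts X"
  shows "shifted_prod (signless_laplacian X) (nverts X) [of_nat r + c, of_nat r - c] $$ (i, j) =
    of_nat (common_nbrs X i j) - c ^ 2 * (if i = j then 1 else 0)"
proof -
  let ?Q = "signless_laplacian X" and ?n = "nverts X"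
  let ?e = "\<lambda>i k. if adj X i k then (1::complex) else 0"
  have C: "?Q \<in> carrier_mat ?n ?n" by (rule signless_laplacian_carrier)
  have "shifted_prod ?Q ?n [of_nat r + c, of_nat r - c] $$ (i, j) =
      (\<Sum>k<?n. (?Q - (of_nat r + c) \<cdot>\<^sub>m 1\<^sub>m ?n) $$ (i, k)
          * (?Q - (of_nat r - c) \<cdot>\<^sub>m 1\<^sub>m ?n) $$ (k, j))"
    unfolding shifted_prod_pair[OF C]
    by (rule index_mult_mat_sum[OF shifted_mat_carrier[OF C] shifted_mat_carrier[OF C] i j])
  also have "\<dots> = (\<Sum>k<?n. ?e i k * ?e k j + ?e i k * (if k = j then c else 0)
        - ((if i = k then c else 0) * ?e k j
            + (if i = k then c else 0) * (if k = j then c else 0)))"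
  proof (intro sum.cong refl)
    fix k assume "k \<in> {..<?n}"
    then show "(?Q - (of_nat r + c) \<cdot>\<^sub>m 1\<^sub>m ?n) $$ (i, k)
        * (?Q - (of_nat r - c) \<cdot>\<^sub>m 1\<^sub>m ?n) $$ (k, j) =
        ?e i k * ?e k j + ?e i k * (if k = j then c else 0)
        - ((if i = k then c else 0) * ?e k j + (if i = k then c else 0) * (if k = j then c else 0))"
      using i j by (simp only: regular_shifted_laplacian_index[OF R] lessThan_iff)
          (simp add: algebra_simps)
  qed
  also have "\<dots> = (\<Sum>k<?n. ?e i k * ?e k j) + ?e i j * c
      - (c * ?e i j + c * (if i = j then c else 0))"
    using i j by (simp add: sum.distrib sum_subtractf sum_delta_right sum_delta_left)
  also have "(\<Sum>k<?n. ?e i k * ?e k j) = (\<Sum>k<?n. if adj X i k \<and> adj X k j then 1 else 0)"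
    by (intro sum.cong) auto
  also have "\<dots> = of_nat (common_nbrs X i j)"
    by (simp add: common_nbrs_def sum_if_card)
  finally show ?thesis by (simp add: power2_eq_square)
qed

text \<open>The Q-eigenvalues of K_(r+1) and of the crown graph lie among r + 1, r - 1, 2r and 0.
  They are listed as r \<plusminus> 1, r \<plusminus> r so that the product splits into two factors of the
  previous lemma, giving (A^2 - I)(A^2 - r^2 I).\<close>

definition annihilator_roots :: "nat \<Rightarrow> complex list" where
  "annihilator_roots r = [of_nat r + 1, of_nat r - 1, of_nat r + of_nat r, of_nat r - of_nat r]"

definition annihilator_entry :: "graph \<Rightarrow> nat \<Rightarrow> nat \<Rightarrow> nat \<Rightarrow> int" where
  "annihilator_entry X r i j = (\<Sum>k<nverts X. (int (common_nbrs X i k) - (if i = k then 1 else 0)) *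
     (int (common_nbrs X k j) - (if k = j then int r ^ 2 else 0)))"

lemma regular_annihilator_index:
  assumes R: "regular_graph X r" and i: "i < nverts X" and j: "j < nverts X"
  shows "shifted_prod (signless_laplacian X) (nverts X) (annihilator_roots r) $$ (i, j) =
    of_int (annihilator_entry X r i j)"
proof -
  let ?Q = "signless_laplacian X" and ?n = "nverts X"
  let ?F = "shifted_prod ?Q ?n [of_nat r + 1, of_nat r - 1]"
    and ?G = "shifted_prod ?Q ?n [of_nat r + of_nat r, of_nat r - of_nat r]"
  have C: "?Q \<in> carrier_mat ?n ?n" by (rule signless_laplacian_carrier)
  have "shifted_prod ?Q ?n (annihilator_roots r) $$ (i, j) = (?F * ?G) $$ (i, j)"
    unfolding annihilator_roots_def shifted_prod_append[OF C, symmetric] by simp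
  also have "\<dots> = (\<Sum>k<?n. ?F $$ (i, k) * ?G $$ (k, j))"
    by (rule index_mult_mat_sum[OF shifted_prod_carrier[OF C] shifted_prod_carrier[OF C] i j])
  also have "\<dots> = of_int (annihilator_entry X r i j)"
    unfolding annihilator_entry_def of_int_sum
  proof (intro sum.cong refl)
    fix k assume "k \<in> {..<?n}"
    then have k: "k < ?n" by simp
    show "?F $$ (i, k) * ?G $$ (k, j)
        = of_int ((int (common_nbrs X i k) - (if i = k then 1 else 0)) *
        (int (common_nbrs X k j) - (if k = j then int r ^ 2 else 0)))"
      unfolding regular_shifted_prod_pair_index[OF R i k] regular_shifted_prod_pair_index[OF R k j]
      by simp
  qed
  finally show ?thesis .
qed

lemma regular_trace_annihilator_square:
  assumes R: "regular_graph X r"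
  shows "mat_trace
      (shifted_prod (signless_laplacian X) (nverts X) (annihilator_roots r @ annihilator_roots r)) =
    of_int (\<Sum>i<nverts X. \<Sum>k<nverts X. annihilator_entry X r i k * annihilator_entry X r k i)"
proof -
  let ?Q = "signless_laplacian X" and ?n = "nverts X"
  let ?N = "shifted_prod ?Q ?n (annihilator_roots r)"
  have C: "?Q \<in> carrier_mat ?n ?n" by (rule signless_laplacian_carrier)
  have N: "?N \<in> carrier_mat ?n ?n" by (rule shifted_prod_carrier[OF C])
  have "mat_trace (shifted_prod ?Q ?n (annihilator_roots r @ annihilator_roots r))
      = (\<Sum>i<?n. (?N * ?N) $$ (i, i))"
    unfolding mat_trace_def shifted_prod_append[OF C] using N by simp
  also have "\<dots> = (\<Sum>i<?n. \<Sum>k<?n. of_int (annihilator_entry X r i k * annihilator_entry X r k i))"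
    by (intro sum.cong refl) (simp add: index_mult_mat_sum[OF N N] regular_annihilator_index[OF R])
  finally show ?thesis by simp
qed

lemma regular_trace_cube:
  assumes R: "regular_graph X r"
  shows "mat_trace (shifted_prod (signless_laplacian X) (nverts X) [of_nat r, of_nat r, of_nat r]) =
    of_nat (closed_walks3 X)"
proof -
  let ?Q = "signless_laplacian X" and ?n = "nverts X"
  let ?A = "shifted_prod ?Q ?n [of_nat r]"
      and ?A2 = "shifted_prod ?Q ?n [of_nat r + 0, of_nat r - 0]"
  have C: "?Q \<in> carrier_mat ?n ?n" by (rule signless_laplacian_carrier)
  have "shifted_prod ?Q ?n [of_nat r, of_nat r, of_nat r] = ?A * ?A2"
    unfolding shifted_prod_append[OF C, symmetric] by simp
  then have "mat_trace (shifted_prod ?Q ?n [of_nat r, of_nat r, of_nat r])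
      = (\<Sum>i<?n. (?A * ?A2) $$ (i, i))"
    unfolding mat_trace_def using shifted_prod_carrier[OF C, of "[of_nat r]"] by simp
  also have "\<dots> = (\<Sum>i<?n. \<Sum>k<?n. of_nat (if adj X i k then common_nbrs X k i else 0))"
  proof (intro sum.cong refl)
    fix i assume "i \<in> {..<?n}"
    then have i: "i < ?n" by simp
    have "?A $$ (i, k) * ?A2 $$ (k, i)
        = of_nat (if adj X i k then common_nbrs X k i else 0)" if k: "k < ?n" for k
      unfolding regular_shifted_prod_pair_index[OF R k i] shifted_prod_single[OF C]
        regular_shifted_laplacian_index[OF R i k] by simp
    then show "(?A * ?A2) $$ (i, i) = (\<Sum>k<?n. of_nat (if adj X i k then common_nbrs X k i else 0))"
      by (simp add: index_mult_mat_sum[OF shifted_prod_carrier[OF C] shifted_prod_carrier[OF C] i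
          i])
  qed
  finally show ?thesis by (simp add: closed_walks3_def)
qed

lemma annihilator_entry_expand:
  assumes i: "i < nverts X" and j: "j < nverts X"
  shows "annihilator_entry X r i j =
    (\<Sum>k<nverts X. int (common_nbrs X i k) * int (common_nbrs X k j))
      - int r ^ 2 * int (common_nbrs X i j) - int (common_nbrs X i j)
          + (if i = j then int r ^ 2 else 0)"
proof -
  let ?n = "nverts X" and ?c = "\<lambda>i j. int (common_nbrs X i j)"
  have "annihilator_entry X r i j
      = (\<Sum>k<?n. ?c i k * ?c k j - ?c i k * (if k = j then int r ^ 2 else 0)
      - ((if i = k then 1 else 0) * ?c k j
          - (if i = k then 1 else 0) * (if k = j then int r ^ 2 else 0)))"
    unfolding annihilator_entry_def by (intro sum.cong refl) (simp add: algebra_simps)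
  also have "\<dots> = (\<Sum>k<?n. ?c i k * ?c k j) - ?c i j * int r ^ 2
      - (?c i j - (if i = j then int r ^ 2 else 0))"
    by (simp only: sum_subtractf sum_delta_right[OF j] sum_delta_left[OF i]) simp
  finally show ?thesis by (simp add: algebra_simps)
qed

lemma annihilator_entry_sym:
  assumes S: "simple_graph X" and i: "i < nverts X" and j: "j < nverts X"
  shows "annihilator_entry X r i j = annihilator_entry X r j i"
proof -
  have "(\<Sum>k<nverts X. int (common_nbrs X i k) * int (common_nbrs X k j)) =
      (\<Sum>k<nverts X. int (common_nbrs X j k) * int (common_nbrs X k i))"
    by (intro sum.cong refl) (simp add: common_nbrs_sym[OF S, of i] common_nbrs_sym[OF S, of _ j])
  then show ?thesis
    unfolding annihilator_entry_expand[OF i j] annihilator_entry_expand[OF j i]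
    using common_nbrs_sym[OF S, of i j] by auto
qed

section \<open>Consequences of equal Q-spectra\<close>

lemma mat_trace_shifted_prod_spec_Q:
  "mat_trace (shifted_prod (signless_laplacian X) (nverts X) as) = (\<Sum>x\<in>#spec_Q X. \<Prod>a\<leftarrow>as. x - a)"
  unfolding spec_Q_def by (rule mat_trace_shifted_prod_eigenvalues[OF signless_laplacian_carrier])

lemma cospectral_trace_shifted_prod:
  "spec_Q H = spec_Q G \<Longrightarrow> mat_trace (shifted_prod (signless_laplacian H) (nverts H) as) =
    mat_trace (shifted_prod (signless_laplacian G) (nverts G) as)"
  by (simp add: mat_trace_shifted_prod_spec_Q)

lemma cospectral_nverts:
  assumes "spec_Q H = spec_Q G"
  shows "nverts H = nverts G"
proof -
  have "mat_trace (shifted_prod (signless_laplacian X) (nverts X) []) = of_nat (nverts X)" for X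
    by (simp add: mat_trace_def)
  then show ?thesis using cospectral_trace_shifted_prod[OF assms, of "[]"] by simp
qed

lemma regular_of_degree_moments:
  fixes d :: "nat \<Rightarrow> nat"
  assumes s1: "(\<Sum>i<n. d i) = r * n" and s2: "(\<Sum>i<n. d i ^ 2 + d i) = (r ^ 2 + r) * n"
  shows "\<forall>i<n. d i = r"
proof -
  have s1': "(\<Sum>i<n. int (d i)) = int r * int n"
    using arg_cong[OF s1, of int] by simp
  have "(\<Sum>i<n. int (d i) ^ 2 + int (d i)) = (int r ^ 2 + int r) * int n"
    using arg_cong[OF s2, of int] by simp
  then have s2': "(\<Sum>i<n. int (d i) ^ 2) = int r ^ 2 * int n"
    using s1' by (simp add: sum.distrib algebra_simps)
  have "(\<Sum>i<n. (int (d i) - int r) ^ 2) = (\<Sum>i<n. int (d i) ^ 2 - 2 * int r * int (d i) + int r ^ 2)"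
    by (intro sum.cong refl) (simp add: power2_diff)
  also have "\<dots> = (\<Sum>i<n. int (d i) ^ 2) - (\<Sum>i<n. 2 * int r * int (d i)) + (\<Sum>i<n. int r ^ 2)"
    by (simp only: sum.distrib sum_subtractf)
  also have "\<dots> = 0"
    by (simp only: s2' s1' flip: sum_distrib_left) (simp add: algebra_simps power2_eq_square)
  finally have "\<forall>i\<in>{..<n}. (int (d i) - int r) ^ 2 = 0"
    by (subst sum_nonneg_eq_0_iff[symmetric]) auto
  then show ?thesis by auto
qed

lemma cospectral_regular:
  assumes SH: "simple_graph H" and SG: "simple_graph G" and RG: "regular_graph G r"
    and sp: "spec_Q H = spec_Q G"
  shows "regular_graph H r"
proof -
  let ?n = "nverts G"
  have n: "nverts H = ?n" by (rule cospectral_nverts[OF sp])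
  have zero: "shifted_prod (signless_laplacian X) (nverts X) [0] = signless_laplacian X"
    and zero2: "shifted_prod (signless_laplacian X) (nverts X) [0, 0]
        = signless_laplacian X * signless_laplacian X" for X
    by (simp_all add: shifted_prod_single shifted_prod_pair minus_zero_smult_one
        signless_laplacian_carrier)
  have "mat_trace (signless_laplacian H) = mat_trace (signless_laplacian G)"
    using cospectral_trace_shifted_prod[OF sp, of "[0]"] by (simp only: zero)
  then have "(of_nat (\<Sum>i<?n. degree H i) :: complex) = of_nat (\<Sum>i<?n. degree G i)"
    using n by (simp add: mat_trace_signless_laplacian[OF SH] mat_trace_signless_laplacian[OF SG])
  then have s1: "(\<Sum>i<?n. degree H i) = r * ?n"
    using RG by (simp only: of_nat_eq_iff) (simp add: regular_graph_def)
  have "mat_trace (signless_laplacian H * signless_laplacian H) =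
      mat_trace (signless_laplacian G * signless_laplacian G)"
    using cospectral_trace_shifted_prod[OF sp, of "[0, 0]"] by (simp only: zero2)
  then have "(of_nat (\<Sum>i<?n. degree H i ^ 2 + degree H i) :: complex) =
      of_nat (\<Sum>i<?n. degree G i ^ 2 + degree G i)"
    using n by (simp add: mat_trace_signless_laplacian_square[OF SH]
        mat_trace_signless_laplacian_square[OF SG])
  then have s2: "(\<Sum>i<?n. degree H i ^ 2 + degree H i) = (r ^ 2 + r) * ?n"
    using RG by (simp only: of_nat_eq_iff) (simp add: regular_graph_def)
  show ?thesis
    using regular_of_degree_moments[OF s1 s2] n by (simp add: regular_graph_def)
qed

lemma cospectral_annihilator_zero:
  assumes SH: "simple_graph H" and RH: "regular_graph H r" and RG: "regular_graph G r"
    and sp: "spec_Q H = spec_Q G"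
    and NG: "\<And>i j. i < nverts G \<Longrightarrow> j < nverts G \<Longrightarrow> annihilator_entry G r i j = 0"
    and i: "i < nverts H" and j: "j < nverts H"
  shows "annihilator_entry H r i j = 0"
proof -
  let ?n = "nverts H" and ?N = "annihilator_entry H r"
  have "(of_int (\<Sum>i<?n. \<Sum>k<?n. ?N i k * ?N k i) :: complex) =
      of_int (\<Sum>i<nverts G. \<Sum>k<nverts G. annihilator_entry G r i k * annihilator_entry G r k i)"
    using cospectral_trace_shifted_prod[OF sp, of "annihilator_roots r @ annihilator_roots r"]
    by (simp only: regular_trace_annihilator_square[OF RH] regular_trace_annihilator_square[OF RG])
  then have "(\<Sum>i<?n. \<Sum>k<?n. ?N i k * ?N k i) = 0"
    using NG by (simp only: of_int_eq_iff) simp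
  moreover have "(\<Sum>i<?n. \<Sum>k<?n. ?N i k * ?N k i) = (\<Sum>i<?n. \<Sum>k<?n. ?N i k ^ 2)"
    using annihilator_entry_sym[OF SH] by (intro sum.cong refl) (simp add: power2_eq_square)
  ultimately have "\<forall>i\<in>{..<?n}. (\<Sum>k<?n. ?N i k ^ 2) = 0"
    by (subst sum_nonneg_eq_0_iff[symmetric]) (auto intro: sum_nonneg)
  then have "\<forall>k\<in>{..<?n}. ?N i k ^ 2 = 0"
    using i by (subst sum_nonneg_eq_0_iff[symmetric]) auto
  then show ?thesis using j by simp
qed

lemma cospectral_closed_walks3:
  assumes RH: "regular_graph H r" and RG: "regular_graph G r" and sp: "spec_Q H = spec_Q G"
  shows "closed_walks3 H = closed_walks3 G"
proof -
  have "(of_nat (closed_walks3 H) :: complex) = of_nat (closed_walks3 G)"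
    using cospectral_trace_shifted_prod[OF sp, of "[of_nat r, of_nat r, of_nat r]"]
    by (simp only: regular_trace_cube[OF RH] regular_trace_cube[OF RG])
  then show ?thesis by (simp only: of_nat_eq_iff)
qed

section \<open>Integer matrices with M^2 = q(q + 2) M\<close>

locale scaled_idempotent =
  fixes M :: "nat \<Rightarrow> nat \<Rightarrow> int" and n :: nat and q :: int
  assumes sym: "\<And>i j. i < n \<Longrightarrow> j < n \<Longrightarrow> M i j = M j i"
    and nonneg: "\<And>i j. i < n \<Longrightarrow> j < n \<Longrightarrow> M i j \<ge> 0"
    and diag: "\<And>i. i < n \<Longrightarrow> M i i = q"
    and row_sum: "\<And>i. i < n \<Longrightarrow> (\<Sum>k<n. M i k) = q * (q + 2)"
    and square: "\<And>i j. i < n \<Longrightarrow> j < n \<Longrightarrow> (\<Sum>k<n. M i k * M k j) = q * (q + 2) * M i j"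
    and q_pos: "q \<ge> 1"
begin

lemma entry_le_diag:
  assumes ij: "i < n" "j < n"
  shows "M i j \<le> q"
proof -
  let ?S = "(\<lambda>(i, j). M i j) ` ({..<n} \<times> {..<n})"
  have fin: "finite ?S" by simp
  obtain a b where ab: "a < n" "b < n" "M a b = Max ?S"
    using Max_in[OF fin] ij by fastforce
  have le: "\<And>i j. i < n \<Longrightarrow> j < n \<Longrightarrow> M i j \<le> Max ?S"
    by (intro Max_ge[OF fin]) auto
  \<comment> \<open>a sum of nonnegative terms that vanishes by the row-sum and square identities\<close>
  have "(\<Sum>k<n. M a k * (Max ?S - M k b)) = Max ?S * (\<Sum>k<n. M a k) - (\<Sum>k<n. M a k * M k b)"
    by (simp add: algebra_simps sum_subtractf sum_distrib_left sum_distrib_right)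
  also have "\<dots> = 0" using row_sum[OF ab(1)] square[OF ab(1,2)] ab(3) by simp
  finally have "\<forall>k\<in>{..<n}. M a k * (Max ?S - M k b) = 0"
    using nonneg le ab by (subst sum_nonneg_eq_0_iff[symmetric]) auto
  then have "M a b * (Max ?S - M b b) = 0" using ab by blast
  moreover have "M a b > 0" using ab le[OF ab(1) ab(1)] diag[OF ab(1)] q_pos by auto
  ultimately have "Max ?S = q" using diag[OF ab(2)] by simp
  then show ?thesis using le[OF ij] by simp
qed

lemma entry_cases:
  assumes ij: "i < n" "j < n"
  shows "M i j = 0 \<or> M i j = q"
proof -
  have "(\<Sum>k<n. M i k * (q - M i k)) = q * (\<Sum>k<n. M i k) - (\<Sum>k<n. M i k * M k i)"
    using sym ij by (simp add: algebra_simps sum_subtractf sum_distrib_left)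
  also have "\<dots> = 0"
    using row_sum[OF ij(1)] square[OF ij(1) ij(1)] diag[OF ij(1)] by (simp add: algebra_simps)
  finally have "\<forall>k\<in>{..<n}. M i k * (q - M i k) = 0"
    using nonneg entry_le_diag ij by (subst sum_nonneg_eq_0_iff[symmetric]) auto
  then show ?thesis using ij by auto
qed

lemma pos_trans:
  assumes "i < n" "j < n" "k < n" "M i j > 0" "M j k > 0"
  shows "M i k > 0"
proof -
  have "M i j * M j k \<le> (\<Sum>l<n. M i l * M l k)"
    using assms nonneg by (intro member_le_sum) auto
  then have "q * (q + 2) * M i k > 0"
    using assms square[of i k] by (smt (verit) mult_pos_pos)
  moreover have "q * (q + 2) > 0" using q_pos by simp
  ultimately show ?thesis by (rule zero_less_mult_pos)
qed

lemma card_support: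
  assumes i: "i < n"
  shows "int (card {k. k < n \<and> M i k > 0}) = q + 2"
proof -
  have "q * (q + 2) = (\<Sum>k<n. M i k)" using row_sum[OF i] by simp
  also have "\<dots> = (\<Sum>k<n. if M i k > 0 then q else 0)"
    using entry_cases[OF i] q_pos by (intro sum.cong) fastforce+
  also have "\<dots> = int (card {k. k < n \<and> M i k > 0}) * q"
    by (rule sum_if_card)
  finally show ?thesis using q_pos by simp
qed

end

section \<open>The common-neighbour pattern\<close>

definition common_nbr_pattern :: "graph \<Rightarrow> nat \<Rightarrow> (nat \<Rightarrow> 'c) \<Rightarrow> bool" where
  "common_nbr_pattern X r cls \<longleftrightarrow>
     (\<forall>i<nverts X. \<forall>j<nverts X.
        common_nbrs X i j = (if i = j then r else if cls i = cls j then r - 1 else 0)) \<and>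
     (\<forall>i<nverts X. card {j. j < nverts X \<and> cls j = cls i} = r + 1)"

definition block_degree :: "graph \<Rightarrow> (nat \<Rightarrow> 'c) \<Rightarrow> nat \<Rightarrow> nat" where
  "block_degree X cls i = card {k. k < nverts X \<and> adj X i k \<and> cls k = cls i}"

lemma common_nbr_pattern_annihilator_zero:
  assumes P: "common_nbr_pattern X r cls" and r: "r \<ge> 2" and i: "i < nverts X" and j: "j < nverts X"
  shows "annihilator_entry X r i j = 0"
proof -
  let ?n = "nverts X"
  let ?B = "\<lambda>i k. if cls i = cls k then (1::int) else 0"
  have c2: "\<And>i j. i < ?n \<Longrightarrow> j < ?n \<Longrightarrow>
      common_nbrs X i j = (if i = j then r else if cls i = cls j then r - 1 else 0)"
    and card_cls: "\<And>i. i < ?n \<Longrightarrow> card {j. j < ?n \<and> cls j = cls i} = r + 1"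
    using P unfolding common_nbr_pattern_def by blast+
  have f1: "int (common_nbrs X i k) - (if i = k then 1 else 0)
      = (int r - 1) * ?B i k" if "k < ?n" for k
    using c2[OF i that] r by auto
  have f2: "int (common_nbrs X k j) - (if k = j then int r ^ 2 else 0) =
      (int r - 1) * ?B k j - (if k = j then int r ^ 2 - 1 else 0)" if "k < ?n" for k
    using c2[OF that j] r by auto
  have "annihilator_entry X r i j =
      (\<Sum>k<?n. (int r - 1)^2 * (?B i k * ?B k j)
          - ((int r - 1) * ?B i k) * (if k = j then int r ^ 2 - 1 else 0))"
    unfolding annihilator_entry_def
    by (intro sum.cong refl) (simp add: f1 f2 algebra_simps power2_eq_square)
  also have "\<dots> = (int r - 1)^2 * (\<Sum>k<?n. ?B i k * ?B k j)
      - ((int r - 1) * ?B i j) * (int r ^ 2 - 1)"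
    by (simp only: sum_subtractf sum_delta_right[OF j] sum_distrib_left[symmetric])
  also have "(\<Sum>k<?n. ?B i k * ?B k j) = (if cls i = cls j then int (r + 1) else 0)"
  proof -
    have "(\<Sum>k<?n. ?B i k * ?B k j) = (\<Sum>k<?n. if cls k = cls i \<and> cls i = cls j then 1 else 0)"
      by (intro sum.cong) auto
    then show ?thesis using card_cls[OF i] by (cases "cls i = cls j") (simp_all add: sum_if_card)
  qed
  finally show ?thesis by (cases "cls i = cls j") (simp_all add: power2_eq_square algebra_simps)
qed

definition adj_sq_minus_id :: "graph \<Rightarrow> nat \<Rightarrow> nat \<Rightarrow> int" where
  "adj_sq_minus_id X i k = int (common_nbrs X i k) - (if i = k then 1 else 0)"

lemma regular_scaled_idempotent:
  assumes S: "simple_graph X" and R: "regular_graph X r" and r: "r \<ge> 2"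
    and N0: "\<And>i j. i < nverts X \<Longrightarrow> j < nverts X \<Longrightarrow> annihilator_entry X r i j = 0"
  shows "scaled_idempotent (adj_sq_minus_id X) (nverts X) (int r - 1)"
proof
  let ?n = "nverts X" and ?M = "adj_sq_minus_id X"
  have diag: "i < ?n \<Longrightarrow> common_nbrs X i i = r" for i
    using common_nbrs_diag[OF S] R by (simp add: regular_graph_def)
  show "?M i j = ?M j i" for i j using common_nbrs_sym[OF S] by (simp add: adj_sq_minus_id_def)
  show "?M i j \<ge> 0" if "i < ?n" for i j
    using diag[OF that] r by (cases "i = j") (auto simp: adj_sq_minus_id_def)
  show "?M i i = int r - 1" if "i < ?n" for i using diag[OF that] by (simp add: adj_sq_minus_id_def)
  show "(\<Sum>k<?n. ?M i k) = (int r - 1) * (int r - 1 + 2)" if i: "i < ?n" for i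
  proof -
    have "(\<Sum>k<?n. ?M i k) = int (\<Sum>k<?n. common_nbrs X i k) - 1"
      using i by (simp add: adj_sq_minus_id_def sum_subtractf)
    then show ?thesis using regular_common_nbrs_row_sum[OF R i] by (simp add: algebra_simps)
  qed
  show "(\<Sum>k<?n. ?M i k * ?M k j) = (int r - 1) * (int r - 1 + 2) * ?M i j"
    if i: "i < ?n" and j: "j < ?n" for i j
  proof -
    have "annihilator_entry X r i j
        = (\<Sum>k<?n. ?M i k * ?M k j - ?M i k * (if k = j then int r ^ 2 - 1 else 0))"
      unfolding annihilator_entry_def adj_sq_minus_id_def
      by (intro sum.cong refl) (simp add: algebra_simps)
    also have "\<dots> = (\<Sum>k<?n. ?M i k * ?M k j) - ?M i j * (int r ^ 2 - 1)"
      by (simp only: sum_subtractf sum_delta_right[OF j])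
    finally show ?thesis using N0[OF i j] by (simp add: power2_eq_square algebra_simps)
  qed
  show "int r - 1 \<ge> 1" using r by simp
qed

lemma annihilator_zero_common_nbr_pattern:
  assumes S: "simple_graph X" and R: "regular_graph X r" and r: "r \<ge> 2"
    and N0: "\<And>i j. i < nverts X \<Longrightarrow> j < nverts X \<Longrightarrow> annihilator_entry X r i j = 0"
  obtains cls :: "nat \<Rightarrow> nat set" where "common_nbr_pattern X r cls"
proof -
  let ?n = "nverts X" and ?M = "adj_sq_minus_id X"
  interpret M: scaled_idempotent ?M ?n "int r - 1"
    by (rule regular_scaled_idempotent[OF S R r N0])
  define cls where "cls i = {k. k < ?n \<and> 0 < ?M i k}" for i
  have cls_eq: "cls i = cls j \<longleftrightarrow> 0 < ?M i j" if i: "i < ?n" and j: "j < ?n" for i j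
  proof
    assume "cls i = cls j"
    moreover have "j \<in> cls j" unfolding cls_def using j M.diag[OF j] r by simp
    ultimately show "0 < ?M i j" unfolding cls_def by auto
  next
    assume "0 < ?M i j"
    then show "cls i = cls j"
      unfolding cls_def using M.pos_trans[OF i j] M.pos_trans[OF j i] M.sym[OF i j] by auto
  qed
  have "common_nbr_pattern X r cls"
    unfolding common_nbr_pattern_def
  proof (intro conjI allI impI)
    fix i j assume i: "i < ?n" and j: "j < ?n"
    show "common_nbrs X i j = (if i = j then r else if cls i = cls j then r - 1 else 0)"
    proof (cases "i = j")
      case True
      then show ?thesis using M.diag[OF i] by (simp add: adj_sq_minus_id_def)
    next
      case False
      then have "int (common_nbrs X i j) = 0 \<or> int (common_nbrs X i j) = int r - 1"
        using M.entry_cases[OF i j] by (simp add: adj_sq_minus_id_def)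
      then show ?thesis using False cls_eq[OF i j] r by (auto simp: adj_sq_minus_id_def)
    qed
  next
    fix i assume i: "i < ?n"
    have "cls j = cls i \<longleftrightarrow> 0 < ?M i j" if "j < ?n" for j
      using cls_eq[OF i that] by auto
    then have "{j. j < ?n \<and> cls j = cls i} = {k. k < ?n \<and> 0 < ?M i k}" by auto
    then show "card {j. j < ?n \<and> cls j = cls i} = r + 1"
      using M.card_support[OF i] by simp
  qed
  then show thesis ..
qed

section \<open>The model graph\<close>

text \<open>The model graph g K_m \<union> h (K_(m,m) \<setminus> F) has vertex set template_vertices m g h. A vertex
  is a tuple (kind, component, side, position): kind 0 is a K_m component, all of whose vertices
  are on side 0, and kind 1 a crown with sides 0 and 1. A vertex is adjacent to the vertices at
  other positions in the opposite block of its component; the block of a K_m is opposite to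
  itself.\<close>

type_synonym template_vertex = "nat \<times> nat \<times> nat \<times> nat"

definition template_vertices :: "nat \<Rightarrow> nat \<Rightarrow> nat \<Rightarrow> template_vertex set" where
  "template_vertices m a b =
     {(0, t, 0, s) | t s. t < a \<and> s < m} \<union> {(1, t, c, s) | t c s. t < b \<and> c < 2 \<and> s < m}"

fun template_adj :: "template_vertex \<Rightarrow> template_vertex \<Rightarrow> bool" where
  "template_adj (k, t, c, s) (k', t', c', s') \<longleftrightarrow> k = k' \<and> t = t' \<and> s \<noteq> s' \<and> (k = 0 \<or> c \<noteq> c')"

fun template_block :: "template_vertex \<Rightarrow> nat \<times> nat \<times> nat" where
  "template_block (k, t, c, s) = (k, t, c)"

fun template_pos :: "template_vertex \<Rightarrow> nat" where
  "template_pos (k, t, c, s) = s"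

fun opposite_block :: "nat \<times> nat \<times> nat \<Rightarrow> nat \<times> nat \<times> nat" where
  "opposite_block (k, t, c) = (k, t, if k = 0 then c else 1 - c)"

lemma template_vertices_iff:
  "(k, t, c, s) \<in> template_vertices m a b \<longleftrightarrow>
     s < m \<and> ((k = 0 \<and> c = 0 \<and> t < a) \<or> (k = 1 \<and> c < 2 \<and> t < b))"
  unfolding template_vertices_def by auto

lemma template_vertexE:
  assumes "x \<in> template_vertices m a b"
  obtains t s where "x = (0, t, 0, s)" "t < a" "s < m"
    | t c s where "x = (1, t, c, s)" "t < b" "c < 2" "s < m"
  using assms unfolding template_vertices_def by auto

lemma template_adj_iff:
  assumes "x \<in> template_vertices m a b" "y \<in> template_vertices m a b"
  shows "template_adj x y \<longleftrightarrow>
    template_block y = opposite_block (template_block x) \<and> template_pos x \<noteq> template_pos y"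
  using assms by (auto elim!: template_vertexE; arith)

lemma opposite_block_involution:
  "x \<in> template_vertices m a b
      \<Longrightarrow> opposite_block (opposite_block (template_block x)) = template_block x"
  by (auto elim!: template_vertexE)

lemma finite_template_vertices: "finite (template_vertices m a b)"
proof -
  have "template_vertices m a b \<subseteq> {..<2} \<times> {..<a + b} \<times> {..<2} \<times> {..<m}"
    unfolding template_vertices_def by auto
  then show ?thesis by (rule finite_subset) auto
qed

lemma card_template_vertices: "card (template_vertices m a b) = a * m + b * (2 * m)"
proof -
  have e: "template_vertices m a b =
      (\<lambda>(t, s). (0, t, 0, s)) ` ({..<a} \<times> {..<m}) \<union> Pair 1 ` ({..<b} \<times> {..<2} \<times> {..<m})"
    unfolding template_vertices_def by auto
  have "card ((\<lambda>(t, s). (0::nat, t, 0::nat, s)) ` ({..<a} \<times> {..<m})) = a * m"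
    by (subst card_image) (auto simp: inj_on_def card_cartesian_product)
  moreover have "card (Pair (1::nat) ` ({..<b} \<times> {..<2::nat} \<times> {..<m})) = b * (2 * m)"
    by (subst card_image) (auto simp: inj_on_def card_cartesian_product)
  ultimately show ?thesis unfolding e by (subst card_Un_disjoint) auto
qed

lemma card_template_block_filter:
  assumes block: "\<And>s. (fst p, fst (snd p), snd (snd p), s) \<in> template_vertices m a b \<longleftrightarrow> s < m"
  shows "card {y \<in> template_vertices m a b. template_block y = p \<and> P (template_pos y)} =
    card {s. s < m \<and> P s}"
proof -
  obtain k t c where p: "p = (k, t, c)" by (cases p) auto
  have "{y \<in> template_vertices m a b. template_block y = p \<and> P (template_pos y)} =
      (\<lambda>s. (k, t, c, s)) ` {s. s < m \<and> P s}"
  proof (rule Set.set_eqI)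
    fix y :: template_vertex
    obtain k' t' c' s' where y: "y = (k', t', c', s')" by (cases y) auto
    show "y \<in> {y \<in> template_vertices m a b. template_block y = p \<and> P (template_pos y)} \<longleftrightarrow>
        y \<in> (\<lambda>s. (k, t, c, s)) ` {s. s < m \<and> P s}"
      using block[of s'] p y by auto
  qed
  also have "card \<dots> = card {s. s < m \<and> P s}" by (rule card_image) (auto simp: inj_on_def)
  finally show ?thesis .
qed

lemma card_less_diff_two:
  assumes "u < (m::nat)" "w < m"
  shows "card {s. s < m \<and> s \<noteq> u \<and> s \<noteq> w} = (if u = w then m - 1 else m - 2)"
proof -
  have "{s. s < m \<and> s \<noteq> u \<and> s \<noteq> w} = {..<m} - {u, w}" by auto
  moreover have "card ({..<m} - {u, w}) = card {..<m} - card {u, w}"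
    by (rule card_Diff_subset) (use assms in auto)
  ultimately show ?thesis by (cases "u = w") auto
qed

lemma opposite_block_slice:
  "x \<in> template_vertices m a b \<Longrightarrow>
    (fst (opposite_block (template_block x)), fst (snd (opposite_block (template_block x))),
      snd (snd (opposite_block (template_block x))), s) \<in> template_vertices m a b \<longleftrightarrow> s < m"
  by (auto elim!: template_vertexE simp: template_vertices_iff)

lemma template_block_slice:
  "x \<in> template_vertices m a b \<Longrightarrow>
    (fst (template_block x), fst (snd (template_block x)), snd (snd (template_block x)), s)
      \<in> template_vertices m a b \<longleftrightarrow> s < m"
  by (auto elim!: template_vertexE simp: template_vertices_iff)

lemma template_common_nbrs_card:
  assumes x: "x \<in> template_vertices m a b" and z: "z \<in> template_vertices m a b"
  shows "card {y \<in> template_vertices m a b. template_adj x y \<and> template_adj y z} =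
    (if x = z then m - 1 else if template_block x = template_block z then m - 2 else 0)"
proof -
  let ?V = "template_vertices m a b" and ?opp = "\<lambda>y. opposite_block (template_block y)"
  have e: "{y \<in> ?V. template_adj x y \<and> template_adj y z} =
      {y \<in> ?V. template_block y = ?opp x \<and> template_block z = ?opp y \<and>
         template_pos x \<noteq> template_pos y \<and> template_pos y \<noteq> template_pos z}"
    using template_adj_iff[OF x] template_adj_iff[OF _ z] by blast
  show ?thesis
  proof (cases "template_block x = template_block z")
    case True
    have "template_block y = ?opp x \<Longrightarrow> ?opp y = template_block z" for y
      using True opposite_block_involution[OF x] by simp
    then have e2: "{y \<in> ?V. template_adj x y \<and> template_adj y z} =
        {y \<in> ?V. template_block y
            = ?opp x \<and> (template_pos y \<noteq> template_pos x \<and> template_pos y \<noteq> template_pos z)}"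
      unfolding e by auto
    have pos: "template_pos x < m" "template_pos z < m" using x z by (auto elim!: template_vertexE)
    have "x = z \<longleftrightarrow> template_pos x = template_pos z"
      using True by (cases x, cases z) auto
    moreover have "card {y \<in> ?V. template_adj x y \<and> template_adj y z} =
        card {s. s < m \<and> (s \<noteq> template_pos x \<and> s \<noteq> template_pos z)}"
      unfolding e2 by (rule card_template_block_filter[OF opposite_block_slice[OF x]])
    ultimately show ?thesis using card_less_diff_two[OF pos] True by auto
  next
    case False
    have "template_block y = ?opp x \<Longrightarrow> template_block z \<noteq> ?opp y" for y
      using False opposite_block_involution[OF x] by auto
    then have E: "{y \<in> ?V. template_adj x y \<and> template_adj y z} = {}"
      unfolding e by blast
    have "x \<noteq> z" using False by auto
    then show ?thesis using False by (subst E) simp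
  qed
qed

lemma card_template_block:
  "x \<in> template_vertices m a b \<Longrightarrow>
    card {y \<in> template_vertices m a b. template_block y = template_block x} = m"
  using card_template_block_filter[OF template_block_slice, of x m a b "\<lambda>_. True"] by simp

lemma template_block_degree_card:
  assumes x: "x \<in> template_vertices m a b"
  shows "card {y \<in> template_vertices m a b. template_adj x y \<and> template_block y = template_block x}
    = (if fst x = 0 then m - 1 else 0)"
proof -
  let ?V = "template_vertices m a b" and ?B = "template_block x"
  show ?thesis
  proof (cases "fst x = 0")
    case True
    then have "opposite_block ?B = ?B" by (cases x) auto
    then have "{y \<in> ?V. template_adj x y \<and> template_block y = ?B} =
        {y \<in> ?V. template_block y = ?B \<and> template_pos y \<noteq> template_pos x}"
      using template_adj_iff[OF x] by auto
    moreover have "template_pos x < m" using x by (auto elim!: template_vertexE)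
    ultimately show ?thesis
      using True card_template_block_filter[OF template_block_slice[OF x], of "\<lambda>s. s \<noteq> template_pos x"]
        card_less_diff_two[of "template_pos x" m "template_pos x"] by simp
  next
    case False
    then have "opposite_block ?B \<noteq> ?B"
      using x by (auto elim!: template_vertexE; arith)
    then have E: "{y \<in> ?V. template_adj x y \<and> template_block y = ?B} = {}"
      using template_adj_iff[OF x] by auto
    show ?thesis using False by (subst E) simp
  qed
qed

definition template_labelling :: "nat \<Rightarrow> graph \<Rightarrow> nat \<Rightarrow> nat \<Rightarrow> (nat \<Rightarrow> template_vertex) \<Rightarrow> bool" where
  "template_labelling m X a b \<phi> \<longleftrightarrow> bij_betw \<phi> {..<nverts X} (template_vertices m a b) \<and>
     (\<forall>v<nverts X. \<forall>w<nverts X. adj X v w = template_adj (\<phi> v) (\<phi> w))"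

lemma card_filter_bij_betw:
  assumes "bij_betw \<phi> A B"
  shows "card {x \<in> A. P (\<phi> x)} = card {y \<in> B. P y}"
proof -
  have "\<phi> ` {x \<in> A. P (\<phi> x)} = {y \<in> B. P y}" using assms by (auto simp: bij_betw_def)
  moreover have "inj_on \<phi> {x \<in> A. P (\<phi> x)}" using assms by (auto simp: bij_betw_def inj_on_def)
  ultimately show ?thesis by (metis card_image)
qed

context
  fixes m X a b \<phi>
  assumes L: "template_labelling m X a b \<phi>"
begin

lemma labelling_bij: "bij_betw \<phi> {..<nverts X} (template_vertices m a b)"
  using L unfolding template_labelling_def by auto

lemma labelling_adj: "v < nverts X \<Longrightarrow> w < nverts X \<Longrightarrow> adj X v w = template_adj (\<phi> v) (\<phi> w)"
  using L unfolding template_labelling_def by auto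

lemma labelling_in: "i < nverts X \<Longrightarrow> \<phi> i \<in> template_vertices m a b"
  using labelling_bij by (auto simp: bij_betw_def)

lemma labelling_nverts: "nverts X = (a + 2 * b) * m"
  using bij_betw_same_card[OF labelling_bij] card_template_vertices[of m a b]
  by (simp add: algebra_simps)

lemma labelling_common_nbr_pattern:
  assumes r: "m = r + 1"
  shows "common_nbr_pattern X r (template_block \<circ> \<phi>)"
  unfolding common_nbr_pattern_def
proof (intro conjI allI impI)
  let ?n = "nverts X"
  fix i j assume i: "i < ?n" and j: "j < ?n"
  have "common_nbrs X i j = card {k \<in> {..<?n}. template_adj (\<phi> i) (\<phi> k) \<and> template_adj (\<phi> k) (\<phi> j)}"
    unfolding common_nbrs_def using labelling_adj i j by (intro arg_cong[where f = card]) auto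
  also have "\<dots> = card {y \<in> template_vertices m a b. template_adj (\<phi> i) y \<and> template_adj y (\<phi> j)}"
    by (rule card_filter_bij_betw[OF labelling_bij])
  finally show "common_nbrs X i j =
      (if i = j then r else if (template_block \<circ> \<phi>) i = (template_block \<circ> \<phi>) j then r - 1 else 0)"
    using template_common_nbrs_card[OF labelling_in[OF i] labelling_in[OF j]] r
      bij_betw_imp_inj_on[OF labelling_bij] i j by (auto simp: inj_on_def)
next
  let ?n = "nverts X"
  fix i assume i: "i < ?n"
  have "card {j. j < ?n \<and> (template_block \<circ> \<phi>) j = (template_block \<circ> \<phi>) i} =
      card {j \<in> {..<?n}. template_block (\<phi> j) = template_block (\<phi> i)}"
    by (intro arg_cong[where f = card]) auto
  also have "\<dots> = card {y \<in> template_vertices m a b. template_block y = template_block (\<phi> i)}"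
    by (rule card_filter_bij_betw[OF labelling_bij])
  finally show "card {j. j < ?n \<and> (template_block \<circ> \<phi>) j = (template_block \<circ> \<phi>) i} = r + 1"
    using card_template_block[OF labelling_in[OF i]] r by simp
qed

lemma labelling_block_degree_sum:
  "(\<Sum>i<nverts X. block_degree X (template_block \<circ> \<phi>) i) = (m - 1) * (a * m)"
proof -
  let ?n = "nverts X" and ?V = "template_vertices m a b"
  have "block_degree X (template_block \<circ> \<phi>) i
      = (if fst (\<phi> i) = 0 then m - 1 else 0)" if i: "i < ?n" for i
  proof -
    have "block_degree X (template_block \<circ> \<phi>) i =
        card {k \<in> {..<?n}. template_adj (\<phi> i) (\<phi> k) \<and> template_block (\<phi> k) = template_block (\<phi> i)}"
      unfolding block_degree_def using labelling_adj i by (intro arg_cong[where f = card]) auto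
    also have "\<dots> = card {y \<in> ?V. template_adj (\<phi> i) y \<and> template_block y = template_block (\<phi> i)}"
      by (rule card_filter_bij_betw[OF labelling_bij])
    finally show ?thesis using template_block_degree_card[OF labelling_in[OF i]] by simp
  qed
  then have "(\<Sum>i<?n. block_degree X (template_block \<circ> \<phi>) i) =
      (\<Sum>i<?n. (\<lambda>x. if fst x = 0 then m - 1 else 0) (\<phi> i))" by simp
  also have "\<dots> = (\<Sum>x\<in>?V. if fst x = 0 then m - 1 else 0)"
    by (rule sum.reindex_bij_betw[OF labelling_bij])
  also have "\<dots> = (m - 1) * card {x \<in> ?V. fst x = 0}"
    using sum.inter_filter[of ?V "\<lambda>_. m - 1" "\<lambda>x. fst x = 0"] finite_template_vertices[of m a b]
    by (simp add: mult.commute)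
  also have "{x \<in> ?V. fst x = 0} = (\<lambda>(t, s). (0, t, 0, s)) ` ({..<a} \<times> {..<m})"
    unfolding template_vertices_def by auto
  also have "card \<dots> = a * m"
    by (subst card_image) (auto simp: inj_on_def card_cartesian_product)
  finally show ?thesis .
qed

end

lemma template_labelling_isomorphic:
  assumes LH: "template_labelling m H a b \<phi>" and LG: "template_labelling m G a b \<psi>"
  shows "isomorphic H G"
proof -
  define f where "f = inv_into {..<nverts G} \<psi> \<circ> \<phi>"
  have bG: "bij_betw \<psi> {..<nverts G} (template_vertices m a b)" by (rule labelling_bij[OF LG])
  have bf: "bij_betw f {..<nverts H} {..<nverts G}"
    unfolding f_def by (rule bij_betw_trans[OF labelling_bij[OF LH] bij_betw_inv_into[OF bG]])
  have f: "f v < nverts G" "\<psi> (f v) = \<phi> v" if "v < nverts H" for v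
    using bij_betw_apply[OF bf] labelling_in[OF LH] bij_betw_inv_into_right[OF bG] that
    by (auto simp: f_def)
  show ?thesis unfolding isomorphic_def
  proof (intro exI conjI allI impI)
    show "bij_betw f {0..<nverts H} {0..<nverts G}" using bf by (simp add: atLeast0LessThan)
  next
    fix i j assume "i < nverts H" "j < nverts H"
    then show "adj H i j = adj G (f i) (f j)"
      using labelling_adj[OF LH] labelling_adj[OF LG] f by simp
  qed
qed

lemma complete_graph_template_labelling:
  "template_labelling m (complete_graph m) 1 0 (\<lambda>v. (0, 0, 0, v))"
proof -
  have "template_vertices m 1 0 = (\<lambda>v. (0, 0, 0, v)) ` {..<m}"
    unfolding template_vertices_def by auto
  then have "bij_betw (\<lambda>v. (0::nat, 0::nat, 0::nat, v)) {..<m} (template_vertices m 1 0)"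
    by (simp add: bij_betw_def inj_on_def)
  then show ?thesis unfolding template_labelling_def adj_complete_graph by auto
qed

lemma crown_graph_template_labelling:
  "template_labelling m (crown_graph m) 0 1 (\<lambda>v. if v < m then (1, 0, 0, v) else (1, 0, 1, v - m))"
proof -
  let ?f = "\<lambda>v. if v < m then (1::nat, 0::nat, 0::nat, v) else (1, 0, 1, v - m)"
  have "template_vertices m 0 1 = ?f ` {..<2*m}"
  proof (rule Set.set_eqI)
    fix x :: template_vertex
    obtain k t c s where x: "x = (k, t, c, s)" by (cases x) auto
    show "x \<in> template_vertices m 0 1 \<longleftrightarrow> x \<in> ?f ` {..<2*m}"
    proof
      assume "x \<in> template_vertices m 0 1"
      then have "k = 1" "t = 0" "c < 2" "s < m" using x by (auto simp: template_vertices_iff)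
      then show "x \<in> ?f ` {..<2*m}"
      proof (cases "c = 0")
        case True then show ?thesis using x \<open>k = 1\<close> \<open>t = 0\<close> \<open>s < m\<close>
          by (auto simp: image_iff intro!: bexI[of _ s])
      next
        case False then have "c = 1" using \<open>c < 2\<close> by simp
        then show ?thesis using x \<open>k = 1\<close> \<open>t = 0\<close> \<open>s < m\<close>
          by (auto simp: image_iff intro!: bexI[of _ "s + m"])
      qed
    next
      assume "x \<in> ?f ` {..<2*m}"
      then show "x \<in> template_vertices m 0 1" by (auto simp: template_vertices_iff split: if_splits)
    qed
  qed
  moreover have "inj_on ?f {..<2*m}" by (auto simp: inj_on_def split: if_splits)
  ultimately have "bij_betw ?f {..<2*m} (template_vertices m 0 1)" by (simp add: bij_betw_def)
  moreover have "\<forall>v<2*m. \<forall>w<2*m. adj (crown_graph m) v w = template_adj (?f v) (?f w)"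
    unfolding adj_crown_graph by auto
  ultimately show ?thesis unfolding template_labelling_def by simp
qed

lemma empty_graph_template_labelling: "template_labelling m empty_graph 0 0 f"
  unfolding template_labelling_def
  by (simp add: empty_graph_def nverts_def template_vertices_def bij_betw_def)

fun template_shift :: "nat \<Rightarrow> nat \<Rightarrow> template_vertex \<Rightarrow> template_vertex" where
  "template_shift a b (k, t, c, s) = (k, t + (if k = 0 then a else b), c, s)"

lemma template_adj_shift:
  "template_adj (template_shift a b x) (template_shift a b y) = template_adj x y"
  by (cases x, cases y) auto

lemma template_adj_shift_mixed:
  assumes "x \<in> template_vertices m a b"
  shows "\<not> template_adj x (template_shift a b y)" "\<not> template_adj (template_shift a b y) x"
  using assms by (cases y; auto simp: template_vertices_iff elim!: template_vertexE)+

lemma template_vertices_shift_union: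
  "template_vertices m (a + a') (b + b') =
    template_vertices m a b \<union> template_shift a b ` template_vertices m a' b'"
proof (rule Set.set_eqI)
  fix x :: template_vertex
  obtain k t c s where x: "x = (k, t, c, s)" by (cases x) auto
  show "x \<in> template_vertices m (a + a') (b + b')
      \<longleftrightarrow> x \<in> template_vertices m a b \<union> template_shift a b ` template_vertices m a' b'"
  proof
    assume "x \<in> template_vertices m (a + a') (b + b')"
    then have h: "s < m" "(k = 0 \<and> c = 0 \<and> t < a + a') \<or> (k = 1 \<and> c < 2 \<and> t < b + b')" using x
      by (auto simp: template_vertices_iff)
    show "x \<in> template_vertices m a b \<union> template_shift a b ` template_vertices m a' b'"
    proof (cases "(k = 0 \<and> t < a) \<or> (k = 1 \<and> t < b)")
      case True then show ?thesis using h x by (auto simp: template_vertices_iff)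
    next
      case False
      then have "x = template_shift a b (k, t - (if k = 0 then a else b), c, s)" using h x by auto
      moreover have "(k, t - (if k = 0 then a else b), c, s) \<in> template_vertices m a' b'"
        using h False by (auto simp: template_vertices_iff)
      ultimately show ?thesis by blast
    qed
  next
    assume "x \<in> template_vertices m a b \<union> template_shift a b ` template_vertices m a' b'"
    then show "x \<in> template_vertices m (a + a') (b + b')"
      by (auto simp: template_vertices_iff elim!: template_vertexE)
  qed
qed

lemma template_vertices_shift_disjoint:
  "template_vertices m a b \<inter> template_shift a b ` template_vertices m a' b' = {}"
  by (auto simp: template_vertices_iff elim!: template_vertexE)

lemma inj_template_shift: "inj_on (template_shift a b) A"
proof (rule inj_onI)
  fix x y assume "template_shift a b x = template_shift a b y"
  then show "x = y" by (cases x, cases y) (auto split: if_splits)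
qed

lemma disjoint_union_template_labelling:
  assumes LX: "template_labelling m X a b \<phi>" and LY: "template_labelling m Y a' b' \<psi>"
  shows "template_labelling m (disjoint_union X Y) (a + a') (b + b')
    (\<lambda>v. if v < nverts X then \<phi> v else template_shift a b (\<psi> (v - nverts X)))"
    (is "template_labelling _ _ _ _ ?F")
proof -
  let ?nX = "nverts X" and ?nY = "nverts Y"
      and ?S = "template_shift a b ` template_vertices m a' b'"
  have "bij_betw ?F {..<?nX} (template_vertices m a b)"
    using labelling_bij[OF LX] by (rule bij_betw_cong[THEN iffD1, rotated]) auto
  moreover have "bij_betw ?F {?nX..<?nX + ?nY} ?S"
  proof -
    have "bij_betw (\<lambda>v. v - ?nX) {?nX..<?nX + ?nY} {..<?nY}"
      by (auto simp: bij_betw_def inj_on_def image_minus_const_atLeastLessThan_nat atLeast0LessThan)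
    moreover have "bij_betw (template_shift a b) (template_vertices m a' b') ?S"
      by (simp add: bij_betw_def inj_template_shift)
    ultimately have "bij_betw (template_shift a b \<circ> (\<psi> \<circ> (\<lambda>v. v - ?nX))) {?nX..<?nX + ?nY} ?S"
      using labelling_bij[OF LY] by (blast intro: bij_betw_trans)
    then show ?thesis by (rule bij_betw_cong[THEN iffD1, rotated]) auto
  qed
  ultimately have "bij_betw ?F ({..<?nX} \<union> {?nX..<?nX + ?nY}) (template_vertices m a b \<union> ?S)"
    by (rule bij_betw_combine[OF _ _ template_vertices_shift_disjoint])
  moreover have "{..<?nX} \<union> {?nX..<?nX + ?nY} = {..<nverts (disjoint_union X Y)}" by auto
  ultimately have "bij_betw ?F {..<nverts (disjoint_union X Y)}
      (template_vertices m (a + a') (b + b'))"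
    by (simp add: template_vertices_shift_union)
  moreover have "adj (disjoint_union X Y) v w = template_adj (?F v) (?F w)"
    if "v < ?nX + ?nY" "w < ?nX + ?nY" for v w
  proof (cases "v < ?nX"; cases "w < ?nX")
    assume "\<not> v < ?nX" "\<not> w < ?nX"
    then show ?thesis using labelling_adj[OF LY] that
      by (simp add: adj_disjoint_union template_adj_shift)
  qed (use labelling_adj[OF LX] template_adj_shift_mixed[OF labelling_in[OF LX]] in
      \<open>simp_all add: adj_disjoint_union\<close>)
  ultimately show ?thesis unfolding template_labelling_def by simp
qed

lemma copies_template_labelling:
  assumes "template_labelling m X a b \<phi>"
  shows "\<exists>\<psi>. template_labelling m (copies k X) (k * a) (k * b) \<psi>"
proof (induction k)
  case 0 then show ?case using empty_graph_template_labelling by auto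
next
  case (Suc k)
  then obtain \<psi> where "template_labelling m (copies k X) (k * a) (k * b) \<psi>" by auto
  from disjoint_union_template_labelling[OF this assms] show ?case by (auto simp: add.commute)
qed

lemma clique_crown_union_template_labelling:
  obtains \<phi> where "template_labelling m
    (disjoint_union (copies g (complete_graph m)) (copies h (crown_graph m))) g h \<phi>"
proof -
  obtain \<phi>1 where "template_labelling m (copies g (complete_graph m)) (g * 1) (g * 0) \<phi>1"
    using copies_template_labelling[OF complete_graph_template_labelling] by blast
  moreover obtain \<phi>2 where "template_labelling m (copies h (crown_graph m)) (h * 0) (h * 1) \<phi>2"
    using copies_template_labelling[OF crown_graph_template_labelling] by blast
  ultimately show thesis using disjoint_union_template_labelling that by fastforce
qed

section \<open>Graphs with the common-neighbour pattern\<close>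

definition rank_in :: "nat set \<Rightarrow> nat \<Rightarrow> nat" where
  "rank_in S v = card {u \<in> S. u < v}"

lemma rank_in_less_card: "finite S \<Longrightarrow> v \<in> S \<Longrightarrow> rank_in S v < card S"
  unfolding rank_in_def by (rule psubset_card_mono) auto

lemma rank_in_mono:
  assumes "finite S" "v \<in> S" "v < w"
  shows "rank_in S v < rank_in S w"
  unfolding rank_in_def by (rule psubset_card_mono) (use assms in auto)

lemma rank_in_eq_iff:
  assumes "finite S" "v \<in> S" "w \<in> S"
  shows "rank_in S v = rank_in S w \<longleftrightarrow> v = w"
  using rank_in_mono[OF assms(1,2)] rank_in_mono[OF assms(1,3)]
  by (metis less_irrefl linorder_neqE_nat)

lemma inj_on_Min_disjoint:
  fixes C :: "nat set set"
  assumes "\<And>c. c \<in> C \<Longrightarrow> finite c \<and> c \<noteq> {}"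
    and "\<And>c1 c2 x. c1 \<in> C \<Longrightarrow> c2 \<in> C \<Longrightarrow> x \<in> c1 \<Longrightarrow> x \<in> c2 \<Longrightarrow> c1 = c2"
  shows "inj_on Min C"
proof (rule inj_onI)
  fix c1 c2 assume c: "c1 \<in> C" "c2 \<in> C" "Min c1 = Min (c2 :: nat set)"
  have "Min c1 \<in> c1" using assms(1)[OF c(1)] by (intro Min_in) auto
  moreover have "Min c1 \<in> c2" using assms(1)[OF c(2)] c(3) by (simp add: Min_in)
  ultimately show "c1 = c2" using assms(2)[OF c(1) c(2)] by blast
qed

text \<open>Every vertex v has all its neighbours in a single block, partner v, which they fill up to
  one vertex, mate v. Either partner v = block v, and v lies in a K_(r+1) component, or the two
  blocks are disjoint and span a crown, on which mate is an involution.\<close>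

locale common_nbr_graph =
  fixes X :: graph and r :: nat and cls :: "nat \<Rightarrow> 'c"
  assumes simple: "simple_graph X" and r2: "r \<ge> 2"
      and pattern: "common_nbr_pattern X r cls"
begin

abbreviation n where "n \<equiv> nverts X"

definition block :: "nat \<Rightarrow> nat set" where "block v = {j. j < n \<and> cls j = cls v}"

lemma common_nbrs_eq:
  "i < n \<Longrightarrow> j < n \<Longrightarrow>
    common_nbrs X i j = (if i = j then r else if cls i = cls j then r - 1 else 0)"
  using pattern unfolding common_nbr_pattern_def by blast

lemma card_block: "i < n \<Longrightarrow> card (block i) = r + 1"
  using pattern unfolding common_nbr_pattern_def block_def by blast

lemma degree_eq: "i < n \<Longrightarrow> degree X i = r"
  using common_nbrs_eq[of i i] common_nbrs_diag[OF simple] by simp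

lemma adjD: "adj X v w \<Longrightarrow> v < n \<and> w < n \<and> v \<noteq> w"
  using simple_graphD(1)[OF simple, of v w] simple_graphD(2)[OF simple, of v w]
      simple_graphD(3)[OF simple, of v] by blast

lemma adj_sym: "adj X v w = adj X w v"
  using simple_graphD(4)[OF simple] .

lemma block_self: "v < n \<Longrightarrow> v \<in> block v" by (simp add: block_def)
lemma block_eq_of_mem: "w \<in> block v \<Longrightarrow> block w = block v" by (auto simp: block_def)
lemma block_subset: "block v \<subseteq> {..<n}" by (auto simp: block_def)
lemma finite_block: "finite (block v)" using block_subset finite_subset by blast
lemma block_eq_iff: "v < n \<Longrightarrow> w < n \<Longrightarrow> block v = block w \<longleftrightarrow> cls v = cls w"
  unfolding block_def by auto
lemma block_eq_of_common: "x \<in> block v \<Longrightarrow> x \<in> block w \<Longrightarrow> block v = block w"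
  using block_eq_of_mem[of x v] block_eq_of_mem[of x w] by simp

lemma nbrs_same_cls:
  assumes "adj X v x" "adj X v y"
  shows "cls x = cls y"
proof (cases "x = y")
  case False
  have xy: "x < n" "y < n" using adjD assms by auto
  have "v \<in> {k. k < n \<and> adj X x k \<and> adj X k y}" using assms adjD adj_sym by auto
  moreover have "finite {k. k < n \<and> adj X x k \<and> adj X k y}" by simp
  ultimately have "card {k. k < n \<and> adj X x k \<and> adj X k y} > 0" using card_gt_0_iff by blast
  then have "common_nbrs X x y \<noteq> 0" unfolding common_nbrs_def using gr_implies_not0 by blast
  then show ?thesis using common_nbrs_eq[OF xy] False by (auto split: if_splits)
qed simp

lemma ex_nbr:
  assumes "v < n"
  shows "\<exists>x. adj X v x"
proof (rule ccontr)
  assume "\<nexists>x. adj X v x"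
  then have "degree X v = 0" by (simp add: degree_def)
  then show False using degree_eq[OF assms] r2 by simp
qed

definition some_nbr :: "nat \<Rightarrow> nat" where "some_nbr v = (SOME x. adj X v x)"
definition partner :: "nat \<Rightarrow> nat set" where "partner v = block (some_nbr v)"

lemma adj_some_nbr: "v < n \<Longrightarrow> adj X v (some_nbr v)"
  unfolding some_nbr_def using ex_nbr by (rule someI_ex)

lemma adj_in_partner:
  assumes "adj X v w"
  shows "w \<in> partner v"
proof -
  have v: "v < n" using adjD assms by auto
  have "cls w = cls (some_nbr v)" using nbrs_same_cls[OF assms adj_some_nbr[OF v]] .
  then show ?thesis unfolding partner_def block_def using adjD assms by auto
qed

definition nbrs :: "nat \<Rightarrow> nat set" where "nbrs v = {w. w < n \<and> adj X v w}"

lemma card_nbrs: "v < n \<Longrightarrow> card (nbrs v) = r"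
  using degree_eq unfolding degree_def nbrs_def by simp

lemma nbrs_subset_partner: "nbrs v \<subseteq> partner v" using adj_in_partner unfolding nbrs_def by auto

lemma card_partner: "v < n \<Longrightarrow> card (partner v) = r + 1"
  unfolding partner_def using card_block adjD adj_some_nbr by blast

lemma finite_partner: "finite (partner v)" unfolding partner_def by (rule finite_block)
lemma partner_subset: "partner v \<subseteq> {..<n}" unfolding partner_def by (rule block_subset)

lemma partner_diff_nbrs_singleton:
  assumes v: "v < n"
  shows "\<exists>u. partner v - nbrs v = {u}"
proof -
  have "card (partner v - nbrs v) = card (partner v) - card (nbrs v)"
    by (rule card_Diff_subset[OF finite_subset[OF nbrs_subset_partner finite_partner]
        nbrs_subset_partner])
  then have "card (partner v - nbrs v) = 1" using card_partner[OF v] card_nbrs[OF v] by simp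
  then show ?thesis by (rule card_1_singletonE) auto
qed

definition mate :: "nat \<Rightarrow> nat" where "mate v = (THE u. u \<in> partner v \<and> \<not> adj X v u)"

lemma mate_iff:
  assumes v: "v < n"
  shows "u \<in> partner v \<and> \<not> adj X v u \<longleftrightarrow> u = mate v"
proof -
  obtain u0 where u0: "partner v - nbrs v = {u0}" using partner_diff_nbrs_singleton[OF v] by auto
  have ch: "u \<in> partner v \<and> \<not> adj X v u \<longleftrightarrow> u = u0" for u
  proof -
    have "u \<in> partner v \<and> \<not> adj X v u \<longleftrightarrow> u \<in> partner v - nbrs v" using partner_subset
      unfolding nbrs_def by auto
    then show ?thesis using u0 by auto
  qed
  have "mate v = u0" unfolding mate_def using ch by (intro the_equality) auto
  then show ?thesis using ch by simp
qed

lemma mate_in_partner: "v < n \<Longrightarrow> mate v \<in> partner v" using mate_iff by blast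
lemma not_adj_mate: "v < n \<Longrightarrow> \<not> adj X v (mate v)" using mate_iff by blast
lemma mate_less: "v < n \<Longrightarrow> mate v < n" using mate_in_partner partner_subset by blast

lemma adj_iff_partner:
  assumes v: "v < n" and w: "w < n"
  shows "adj X v w \<longleftrightarrow> w \<in> partner v \<and> w \<noteq> mate v"
  using mate_iff[OF v, of w] adj_in_partner not_adj_mate[OF v] by blast

lemma partner_eq_block:
  assumes "adj X v x"
  shows "partner v = block x"
proof -
  have v: "v < n" using adjD assms by auto
  have "x \<in> partner v" by (rule adj_in_partner[OF assms])
  then have "block x = block (some_nbr v)" unfolding partner_def by (rule block_eq_of_mem)
  then show ?thesis unfolding partner_def by simp
qed

lemma partner_of_nbr:
  assumes "adj X v x"
  shows "partner x = block v"
proof -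
  have "v \<in> partner x" using adj_in_partner assms adj_sym by blast
  then have "block v = block (some_nbr x)" unfolding partner_def by (rule block_eq_of_mem)
  then show ?thesis unfolding partner_def by simp
qed

lemma partner_eq_of_cls:
  assumes v: "v < n" and w: "w < n" and c: "cls v = cls w"
  shows "partner v = partner w"
proof (cases "v = w")
  case False
  then have "common_nbrs X v w = r - 1" using common_nbrs_eq[OF v w] c by simp
  then have "common_nbrs X v w \<noteq> 0" using r2 by simp
  then have "{k. k < n \<and> adj X v k \<and> adj X k w} \<noteq> {}" unfolding common_nbrs_def by (intro notI) simp
  then obtain x where x: "adj X v x" "adj X x w" by auto
  have "partner v = block x" by (rule partner_eq_block[OF x(1)])
  moreover have "partner w = block x" using partner_eq_block[of w x] adj_sym[of x w] x(2) by simp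
  ultimately show ?thesis by simp
qed simp

lemma partner_eq_of_block:
  assumes "v \<in> block w" "w < n"
  shows "partner v = partner w"
proof -
  have "v < n" "cls v = cls w" using assms(1) unfolding block_def by auto
  then show ?thesis using partner_eq_of_cls assms(2) by blast
qed

lemma block_of_partner: "x \<in> partner v \<Longrightarrow> block x = partner v"
  unfolding partner_def by (rule block_eq_of_mem)

definition clique_vertex :: "nat \<Rightarrow> bool" where "clique_vertex v \<longleftrightarrow> v \<in> partner v"

lemma clique_vertex_iff: "v < n \<Longrightarrow> clique_vertex v \<longleftrightarrow> partner v = block v"
  unfolding clique_vertex_def using block_of_partner[of v v] block_self[of v] by auto

lemma mate_clique_vertex:
  assumes v: "v < n" and c: "clique_vertex v"
  shows "mate v = v"
proof -
  have "v \<in> partner v \<and> \<not> adj X v v" using c simple_graphD(3)[OF simple, of v]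
    unfolding clique_vertex_def by simp
  then have "v = mate v" using mate_iff[OF v, of v] by blast
  then show ?thesis by simp
qed

lemma clique_vertex_adj_iff:
  assumes v: "v < n" and w: "w < n" and c: "clique_vertex v"
  shows "adj X v w \<longleftrightarrow> cls w = cls v \<and> w \<noteq> v"
  using adj_iff_partner[OF v w] mate_clique_vertex[OF v c] clique_vertex_iff[OF v] c w
    unfolding block_def by auto

lemma block_partner_disjoint:
  assumes v: "v < n" and c: "\<not> clique_vertex v"
  shows "block v \<inter> partner v = {}"
proof (rule ccontr)
  assume "block v \<inter> partner v \<noteq> {}"
  then obtain x where x: "x \<in> block v" "x \<in> partner v" by auto
  have "block x = block v" using block_eq_of_mem[OF x(1)] .
  moreover have "block x = partner v" using block_of_partner[OF x(2)] .
  ultimately have "partner v = block v" by simp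
  then show False using c clique_vertex_iff[OF v] by simp
qed

lemma clique_vertex_cls:
  assumes v: "v < n" and w: "w < n" and c: "cls v = cls w"
  shows "clique_vertex v \<longleftrightarrow> clique_vertex w"
  using clique_vertex_iff[OF v] clique_vertex_iff[OF w] partner_eq_of_cls[OF v w c]
      block_eq_iff[OF v w] c by simp

lemma clique_vertex_block:
  assumes "w \<in> block v" "v < n"
  shows "clique_vertex w \<longleftrightarrow> clique_vertex v"
proof -
  have "w < n" "cls w = cls v" using assms(1) unfolding block_def by auto
  then show ?thesis using clique_vertex_cls assms(2) by blast
qed

lemma crown_partner_partner:
  assumes v: "v < n" and c: "\<not> clique_vertex v" and x: "x \<in> partner v"
  shows "partner x = block v"
proof -
  have a: "adj X v (some_nbr v)" by (rule adj_some_nbr[OF v])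
  have "partner (some_nbr v) = block v" by (rule partner_of_nbr[OF a])
  moreover have "x \<in> block (some_nbr v)" using x unfolding partner_def .
  moreover have "some_nbr v < n" using adjD a by auto
  ultimately show ?thesis using partner_eq_of_block[of x "some_nbr v"] by simp
qed

lemma crown_mate_mate:
  assumes v: "v < n" and c: "\<not> clique_vertex v"
  shows "mate (mate v) = v"
proof -
  let ?u = "mate v"
  have u: "?u < n" "?u \<in> partner v" using mate_less[OF v] mate_in_partner[OF v] by auto
  have "partner ?u = block v" by (rule crown_partner_partner[OF v c u(2)])
  then have "v \<in> partner ?u" using block_self[OF v] by simp
  moreover have "\<not> adj X ?u v" using not_adj_mate[OF v] adj_sym[of "mate v" v] by simp
  ultimately show ?thesis using mate_iff[OF u(1), of v] by simp
qed

lemma crown_partner_not_clique: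
  assumes v: "v < n" and c: "\<not> clique_vertex v" and x: "x \<in> partner v"
  shows "\<not> clique_vertex x"
proof -
  have "partner x = block v" by (rule crown_partner_partner[OF v c x])
  moreover have "x \<notin> block v" using block_partner_disjoint[OF v c] x by auto
  ultimately show ?thesis unfolding clique_vertex_def by simp
qed

lemma block_degree_eq:
  assumes i: "i < n"
  shows "block_degree X cls i = (if clique_vertex i then r else 0)"
proof (cases "clique_vertex i")
  case True
  have "{k. k < n \<and> adj X i k \<and> cls k = cls i} = block i - {i}"
    using clique_vertex_adj_iff[OF i _ True] unfolding block_def by auto
  then have "block_degree X cls i = card (block i) - 1" unfolding block_degree_def
    using block_self[OF i] finite_block by simp
  then show ?thesis using card_block[OF i] True by simp
next
  case False
  have "{k. k < n \<and> adj X i k \<and> cls k = cls i} = {}"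
  proof -
    have "\<And>k. adj X i k \<Longrightarrow> cls k \<noteq> cls i"
    proof -
      fix k assume a: "adj X i k"
      have "k \<in> partner i" by (rule adj_in_partner[OF a])
      then have "k \<notin> block i" using block_partner_disjoint[OF i False] by auto
      then show "cls k \<noteq> cls i" using adjD[OF a] unfolding block_def by auto
    qed
    then show ?thesis by auto
  qed
  then show ?thesis unfolding block_degree_def using False by simp
qed

lemma closed_walks3_eq: "closed_walks3 X = (r - 1) * (\<Sum>i<n. block_degree X cls i)"
proof -
  have "(\<Sum>k<n. if adj X i k then common_nbrs X k i else 0)
      = (r - 1) * block_degree X cls i" if i: "i < n" for i
  proof -
    have "(\<Sum>k<n. if adj X i k then common_nbrs X k i else 0)
        = (\<Sum>k<n. if adj X i k \<and> cls k = cls i then r - 1 else 0)"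
    proof (intro sum.cong refl)
      fix k assume "k \<in> {..<n}"
      then have k: "k < n" by simp
      show "(if adj X i k then common_nbrs X k i else 0)
          = (if adj X i k \<and> cls k = cls i then r - 1 else 0)"
        using common_nbrs_eq[OF k i] adjD[of i k] by auto
    qed
    also have "\<dots> = (r - 1) * card {k. k < n \<and> adj X i k \<and> cls k = cls i}"
      by (simp add: sum_if_card)
    finally show ?thesis unfolding block_degree_def .
  qed
  then show ?thesis by (simp add: closed_walks3_def sum_distrib_left)
qed

definition clique_vertices :: "nat set" where "clique_vertices = {v. v < n \<and> clique_vertex v}"
definition crown_vertices :: "nat set" where "crown_vertices = {v. v < n \<and> \<not> clique_vertex v}"
definition clique_blocks :: "nat set set" where "clique_blocks = block ` clique_vertices"
definition clique_leaders :: "nat set" where "clique_leaders = Min ` clique_blocks"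
definition crown_of :: "nat \<Rightarrow> nat set" where "crown_of v = block v \<union> partner v"
definition crowns :: "nat set set" where "crowns = crown_of ` crown_vertices"
definition crown_leaders :: "nat set" where "crown_leaders = Min ` crowns"
definition left_side :: "nat \<Rightarrow> nat set" where "left_side v = block (Min (crown_of v))"

lemma Min_in_block: "v < n \<Longrightarrow> Min (block v) \<in> block v"
  using block_self finite_block by (intro Min_in) auto

lemma finite_crown_of: "finite (crown_of v)" unfolding crown_of_def
  using finite_block finite_partner by simp

lemma Min_in_crown_of: "v < n \<Longrightarrow> Min (crown_of v) \<in> crown_of v"
  using block_self finite_crown_of unfolding crown_of_def by (intro Min_in) auto

lemma crown_of_mem:
  assumes v: "v < n" and c: "\<not> clique_vertex v" and x: "x \<in> crown_of v"
  shows "x < n \<and> \<not> clique_vertex x \<and> crown_of x = crown_of v"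
proof (cases "x \<in> block v")
  case True
  have "x < n" using True block_subset by auto
  moreover have "block x = block v" by (rule block_eq_of_mem[OF True])
  moreover have "partner x = partner v" by (rule partner_eq_of_block[OF True v])
  moreover have "\<not> clique_vertex x" using clique_vertex_block[OF True v] c by simp
  ultimately show ?thesis unfolding crown_of_def by simp
next
  case False
  then have xP: "x \<in> partner v" using x unfolding crown_of_def by simp
  have "x < n" using xP partner_subset by auto
  moreover have "block x = partner v" by (rule block_of_partner[OF xP])
  moreover have "partner x = block v" by (rule crown_partner_partner[OF v c xP])
  moreover have "\<not> clique_vertex x" by (rule crown_partner_not_clique[OF v c xP])
  ultimately show ?thesis unfolding crown_of_def by auto
qed

lemma left_side_cases:
  assumes v: "v < n" and c: "\<not> clique_vertex v"
  shows "(v \<in> left_side v \<and> left_side v = block v) \<or> (v \<notin> left_side v \<and> left_side v = partner v)"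
proof -
  have m: "Min (crown_of v) \<in> block v \<union> partner v" using Min_in_crown_of[OF v]
    unfolding crown_of_def .
  have d: "v \<notin> partner v" using c unfolding clique_vertex_def .
  show ?thesis
  proof (cases "Min (crown_of v) \<in> block v")
    case True
    then have "left_side v = block v" unfolding left_side_def by (rule block_eq_of_mem)
    then show ?thesis using block_self[OF v] by simp
  next
    case False
    then have "Min (crown_of v) \<in> partner v" using m by simp
    then have "left_side v = partner v" unfolding left_side_def by (rule block_of_partner)
    then show ?thesis using d by simp
  qed
qed

lemma card_left_side:
  assumes v: "v < n" and c: "\<not> clique_vertex v"
  shows "card (left_side v) = r + 1"
  using left_side_cases[OF v c] card_block[OF v] card_partner[OF v] by auto

lemma finite_left_side: "finite (left_side v)" unfolding left_side_def by (rule finite_block)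

lemma left_side_eq:
  assumes v: "v < n" and c: "\<not> clique_vertex v" and x: "x \<in> crown_of v"
  shows "left_side x = left_side v"
  using crown_of_mem[OF v c x] unfolding left_side_def by simp

lemma clique_blocks_partition:
  shows "finite clique_blocks"
    and "\<And>c. c \<in> clique_blocks \<Longrightarrow> card c = r + 1 \<and> finite c \<and> c \<noteq> {}"
    and "\<And>c1 c2 x. c1 \<in> clique_blocks \<Longrightarrow> c2 \<in> clique_blocks \<Longrightarrow> x \<in> c1 \<Longrightarrow> x \<in> c2 \<Longrightarrow> c1 = c2"
    and "\<Union> clique_blocks = clique_vertices"
proof -
  show "finite clique_blocks" unfolding clique_blocks_def clique_vertices_def by simp
  show "card c = r + 1 \<and> finite c \<and> c \<noteq> {}" if "c \<in> clique_blocks" for c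
    using that card_block finite_block block_self unfolding clique_blocks_def clique_vertices_def
    by auto
  show "c1 = c2" if "c1 \<in> clique_blocks" "c2 \<in> clique_blocks" "x \<in> c1" "x \<in> c2" for c1 c2 x
    using that block_eq_of_common unfolding clique_blocks_def by auto
  show "\<Union> clique_blocks = clique_vertices"
  proof (rule Set.set_eqI)
    fix x show "x \<in> \<Union> clique_blocks \<longleftrightarrow> x \<in> clique_vertices"
    proof
      assume "x \<in> \<Union> clique_blocks"
      then obtain v where v: "v \<in> clique_vertices" "x \<in> block v" unfolding clique_blocks_def by auto
      then show "x \<in> clique_vertices" using clique_vertex_block[OF v(2)] block_subset
        unfolding clique_vertices_def by auto
    next
      assume "x \<in> clique_vertices" then show "x \<in> \<Union> clique_blocks" using block_self
        unfolding clique_blocks_def clique_vertices_def by auto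
    qed
  qed
qed

lemma crowns_partition:
  shows "finite crowns"
    and "\<And>c. c \<in> crowns \<Longrightarrow> card c = 2 * (r + 1) \<and> finite c \<and> c \<noteq> {}"
    and "\<And>c1 c2 x. c1 \<in> crowns \<Longrightarrow> c2 \<in> crowns \<Longrightarrow> x \<in> c1 \<Longrightarrow> x \<in> c2 \<Longrightarrow> c1 = c2"
    and "\<Union> crowns = crown_vertices"
proof -
  show "finite crowns" unfolding crowns_def crown_vertices_def by simp
  show "card c = 2 * (r + 1) \<and> finite c \<and> c \<noteq> {}" if cP: "c \<in> crowns" for c
  proof -
    obtain v where v: "v < n" "\<not> clique_vertex v" "c = crown_of v" using cP
      unfolding crowns_def crown_vertices_def by auto
    have "card (block v \<union> partner v) = card (block v) + card (partner v)"
      by (rule card_Un_disjoint[OF finite_block finite_partner block_partner_disjoint[OF v(1,2)]])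
    then show ?thesis using v card_block card_partner finite_crown_of block_self
      unfolding crown_of_def by auto
  qed
  show "c1 = c2" if h: "c1 \<in> crowns" "c2 \<in> crowns" "x \<in> c1" "x \<in> c2" for c1 c2 x
  proof -
    obtain v where v: "v < n" "\<not> clique_vertex v" "c1 = crown_of v" using h(1)
      unfolding crowns_def crown_vertices_def by auto
    obtain w where w: "w < n" "\<not> clique_vertex w" "c2 = crown_of w" using h(2)
      unfolding crowns_def crown_vertices_def by auto
    have "crown_of x = crown_of v" using crown_of_mem[OF v(1,2)] h(3) v(3) by simp
    moreover have "crown_of x = crown_of w" using crown_of_mem[OF w(1,2)] h(4) w(3) by simp
    ultimately show ?thesis using v w by simp
  qed
  show "\<Union> crowns = crown_vertices"
  proof (rule Set.set_eqI)
    fix x show "x \<in> \<Union> crowns \<longleftrightarrow> x \<in> crown_vertices"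
    proof
      assume "x \<in> \<Union> crowns"
      then obtain v where v: "v < n" "\<not> clique_vertex v" "x \<in> crown_of v"
        unfolding crowns_def crown_vertices_def by auto
      then show "x \<in> crown_vertices" using crown_of_mem[OF v] unfolding crown_vertices_def by auto
    next
      assume "x \<in> crown_vertices" then show "x \<in> \<Union> crowns" using block_self
        unfolding crowns_def crown_vertices_def crown_of_def by auto
    qed
  qed
qed

lemma card_clique_leaders: "card clique_leaders * (r + 1) = card clique_vertices"
proof -
  have "(r + 1) * card clique_blocks = card (\<Union> clique_blocks)"
    by (rule card_partition) (use clique_blocks_partition in \<open>auto simp: clique_vertices_def\<close>)
  moreover have "card clique_leaders = card clique_blocks" unfolding clique_leaders_def
    by (rule card_image, rule inj_on_Min_disjoint) (use clique_blocks_partition in auto)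
  ultimately show ?thesis using clique_blocks_partition(4) by (simp add: mult.commute)
qed

lemma card_crown_leaders: "card crown_leaders * (2 * (r + 1)) = card crown_vertices"
proof -
  have "(2 * (r + 1)) * card crowns = card (\<Union> crowns)"
    by (rule card_partition) (use crowns_partition in \<open>auto simp: crown_vertices_def\<close>)
  moreover have "card crown_leaders = card crowns" unfolding crown_leaders_def
    by (rule card_image, rule inj_on_Min_disjoint) (use crowns_partition in auto)
  ultimately show ?thesis using crowns_partition(4) by (simp add: mult.commute)
qed

lemma Min_block_clique_leader: "v < n \<Longrightarrow> clique_vertex v \<Longrightarrow> Min (block v) \<in> clique_leaders"
  unfolding clique_leaders_def clique_blocks_def clique_vertices_def by auto
lemma Min_crown_leader: "v < n \<Longrightarrow> \<not> clique_vertex v \<Longrightarrow> Min (crown_of v) \<in> crown_leaders"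
  unfolding crown_leaders_def crowns_def crown_vertices_def by auto
lemma finite_clique_leaders: "finite clique_leaders" using clique_blocks_partition(1)
  unfolding clique_leaders_def by simp
lemma finite_crown_leaders: "finite crown_leaders" using crowns_partition(1)
  unfolding crown_leaders_def by simp

lemma mate_in_left_side:
  assumes v: "v < n" and c: "\<not> clique_vertex v" and nl: "v \<notin> left_side v"
  shows "mate v \<in> left_side v"
  using left_side_cases[OF v c] nl mate_in_partner[OF v] by auto

definition left_rep :: "nat \<Rightarrow> nat" where
  "left_rep v = (if v \<in> left_side v then v else mate v)"

lemma left_rep_in_left_side:
  "v < n \<Longrightarrow> \<not> clique_vertex v \<Longrightarrow> left_rep v \<in> left_side v"
  using left_side_cases mate_in_left_side by (auto simp: left_rep_def)

lemma left_rep_inj: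
  assumes v: "v < n" "\<not> clique_vertex v" and w: "w < n" "\<not> clique_vertex w"
    and same: "left_side v = left_side w" "v \<in> left_side v \<longleftrightarrow> w \<in> left_side w"
    and eq: "left_rep v = left_rep w"
  shows "v = w"
proof (cases "v \<in> left_side v")
  case False
  then have "mate v = mate w" using eq same by (simp add: left_rep_def)
  then show ?thesis using crown_mate_mate[OF v] crown_mate_mate[OF w] by metis
qed (use eq same in \<open>simp add: left_rep_def\<close>)

lemma adj_imp_opposite_sides:
  assumes v: "v < n" "\<not> clique_vertex v" and a: "adj X v w"
  shows "left_side w = left_side v \<and> (v \<in> left_side v \<longleftrightarrow> w \<notin> left_side w)"
proof -
  have "w \<in> partner v" by (rule adj_in_partner[OF a])
  moreover from this have "left_side w = left_side v"
    using left_side_eq[OF v] unfolding crown_of_def by auto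
  ultimately show ?thesis using left_side_cases[OF v] block_partner_disjoint[OF v] by auto
qed

lemma crown_adj_iff_left_rep:
  assumes v: "v < n" "\<not> clique_vertex v" and w: "w < n" "\<not> clique_vertex w"
    and same: "left_side v = left_side w" and opp: "v \<in> left_side v \<longleftrightarrow> w \<notin> left_side w"
  shows "adj X v w \<longleftrightarrow> left_rep v \<noteq> left_rep w"
proof -
  have *: "adj X x y \<longleftrightarrow> left_rep x \<noteq> left_rep y"
    if x: "x < n" "\<not> clique_vertex x" and y: "y < n" "\<not> clique_vertex y"
      and "left_side x = left_side y" "x \<in> left_side x" "y \<notin> left_side y" for x y
  proof -
    have "x \<in> partner y" using that left_side_cases[OF x] left_side_cases[OF y] by auto
    then have "adj X y x \<longleftrightarrow> x \<noteq> mate y" using adj_iff_partner[OF y(1) x(1)] by blast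
    then show ?thesis using that adj_sym by (auto simp: left_rep_def)
  qed
  show ?thesis
    using *[OF v w same] *[OF w v same[symmetric]] opp adj_sym by (cases "v \<in> left_side v") auto
qed

text \<open>Components are numbered by the ranks of their least vertices. A crown gets side 0 on the
  block containing its least vertex, and a vertex on side 1 takes the position of its mate.\<close>

definition template_label :: "nat \<Rightarrow> template_vertex" where
  "template_label v = (if clique_vertex v
     then (0, rank_in clique_leaders (Min (block v)), 0, rank_in (block v) v)
     else (1, rank_in crown_leaders (Min (crown_of v)), if v \<in> left_side v then 0 else 1,
           rank_in (left_side v) (left_rep v)))"

lemma template_label_in:
  assumes v: "v < n" and cnt: "card clique_leaders = g" "card crown_leaders = h"
  shows "template_label v \<in> template_vertices (r + 1) g h"
proof (cases "clique_vertex v")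
  case True
  have "rank_in clique_leaders (Min (block v)) < g"
    using rank_in_less_card[OF finite_clique_leaders Min_block_clique_leader[OF v True]] cnt by simp
  moreover have "rank_in (block v) v < r + 1"
    using rank_in_less_card[OF finite_block block_self[OF v]] card_block[OF v] by simp
  ultimately show ?thesis using True by (simp add: template_label_def template_vertices_iff)
next
  case False
  have "rank_in crown_leaders (Min (crown_of v)) < h"
    using rank_in_less_card[OF finite_crown_leaders Min_crown_leader[OF v False]] cnt by simp
  moreover have "rank_in (left_side v) (left_rep v) < r + 1"
    using rank_in_less_card[OF finite_left_side left_rep_in_left_side[OF v False]]
      card_left_side[OF v False] by simp
  ultimately show ?thesis using False by (simp add: template_label_def template_vertices_iff)
qed

lemma Min_block_eq_iff:
  assumes v: "v < n" and w: "w < n"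
  shows "Min (block v) = Min (block w) \<longleftrightarrow> block v = block w"
  using block_eq_of_common[OF Min_in_block[OF v]] Min_in_block[OF w] by auto

lemma Min_crown_of_eq_iff:
  assumes v: "v < n" and w: "w < n" and cv: "\<not> clique_vertex v" and cw: "\<not> clique_vertex w"
  shows "Min (crown_of v) = Min (crown_of w) \<longleftrightarrow> crown_of v = crown_of w"
proof
  assume e: "Min (crown_of v) = Min (crown_of w)"
  have 1: "crown_of (Min (crown_of v)) = crown_of v"
    using crown_of_mem[OF v cv Min_in_crown_of[OF v]] by blast
  have 2: "crown_of (Min (crown_of w)) = crown_of w"
    using crown_of_mem[OF w cw Min_in_crown_of[OF w]] by blast
  show "crown_of v = crown_of w" using 1 2 e by metis
qed simp

lemma rank_clique_leaders_eq_iff: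
  assumes v: "v < n" and w: "w < n" and cv: "clique_vertex v" and cw: "clique_vertex w"
  shows "rank_in clique_leaders (Min (block v)) = rank_in clique_leaders (Min (block w))
      \<longleftrightarrow> block v = block w"
  using rank_in_eq_iff[OF finite_clique_leaders Min_block_clique_leader[OF v cv]
      Min_block_clique_leader[OF w cw]] Min_block_eq_iff[OF v w] by auto

lemma rank_crown_leaders_eq_iff:
  assumes v: "v < n" and w: "w < n" and cv: "\<not> clique_vertex v" and cw: "\<not> clique_vertex w"
  shows "rank_in crown_leaders (Min (crown_of v)) = rank_in crown_leaders (Min (crown_of w))
      \<longleftrightarrow> crown_of v = crown_of w"
  using rank_in_eq_iff[OF finite_crown_leaders Min_crown_leader[OF v cv] Min_crown_leader[OF w cw]]
      Min_crown_of_eq_iff[OF v w cv cw] by auto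

lemma inj_on_template_label: "inj_on template_label {..<n}"
proof (rule inj_onI)
  fix v w assume "v \<in> {..<n}" "w \<in> {..<n}" and e: "template_label v = template_label w"
  then have v: "v < n" and w: "w < n" by auto
  have cc: "clique_vertex v \<longleftrightarrow> clique_vertex w"
    using e by (auto simp: template_label_def split: if_splits)
  show "v = w"
  proof (cases "clique_vertex v")
    case True
    then have b: "block v = block w" and "rank_in (block v) v = rank_in (block v) w"
      using e cc rank_clique_leaders_eq_iff[OF v w] by (auto simp: template_label_def)
    moreover have "w \<in> block v" using block_self[OF w] b by simp
    ultimately show "v = w" using rank_in_eq_iff[OF finite_block block_self[OF v]] by blast
  next
    case False
    then have "crown_of v = crown_of w" "v \<in> left_side v \<longleftrightarrow> w \<in> left_side w"
      and ranks: "rank_in (left_side v) (left_rep v) = rank_in (left_side w) (left_rep w)"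
      using e cc rank_crown_leaders_eq_iff[OF v w]
      by (auto simp: template_label_def split: if_splits)
    moreover from this have same: "left_side v = left_side w" by (simp add: left_side_def)
    moreover have "left_rep v = left_rep w"
      using ranks same rank_in_eq_iff[OF finite_left_side] left_rep_in_left_side v w False cc
      by metis
    ultimately show "v = w" using left_rep_inj[OF v False w] cc False by blast
  qed
qed

lemma adj_iff_template_adj:
  assumes v: "v < n" and w: "w < n"
  shows "adj X v w \<longleftrightarrow> template_adj (template_label v) (template_label w)"
proof (cases "clique_vertex v"; cases "clique_vertex w")
  assume cv: "clique_vertex v" and cw: "clique_vertex w"
  have "template_adj (template_label v) (template_label w)
      \<longleftrightarrow> block v = block w \<and> rank_in (block v) v \<noteq> rank_in (block w) w"
    using cv cw rank_clique_leaders_eq_iff[OF v w cv cw] by (simp add: template_label_def)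
  also have "\<dots> \<longleftrightarrow> block v = block w \<and> v \<noteq> w"
    using rank_in_eq_iff[OF finite_block block_self[OF v], of w] block_self[OF w] by auto
  also have "\<dots> \<longleftrightarrow> adj X v w"
    using clique_vertex_adj_iff[OF v w cv] block_eq_iff[OF v w] by auto
  finally show ?thesis by simp
next
  assume "clique_vertex v" "\<not> clique_vertex w"
  then show ?thesis
    using clique_vertex_adj_iff[OF v w] clique_vertex_cls[OF v w] by (auto simp: template_label_def)
next
  assume "\<not> clique_vertex v" "clique_vertex w"
  then show ?thesis
    using clique_vertex_adj_iff[OF w v] clique_vertex_cls[OF v w] adj_sym
    by (auto simp: template_label_def)
next
  assume cv: "\<not> clique_vertex v" and cw: "\<not> clique_vertex w"
  have "template_adj (template_label v) (template_label w) \<longleftrightarrow>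
      crown_of v = crown_of w \<and> (v \<in> left_side v \<longleftrightarrow> w \<notin> left_side w) \<and>
      rank_in (left_side v) (left_rep v) \<noteq> rank_in (left_side w) (left_rep w)"
    using cv cw rank_crown_leaders_eq_iff[OF v w cv cw] by (auto simp: template_label_def)
  also have "\<dots> \<longleftrightarrow> adj X v w"
  proof
    assume a: "adj X v w"
    then have "left_side w = left_side v" "v \<in> left_side v \<longleftrightarrow> w \<notin> left_side w"
      using adj_imp_opposite_sides[OF v cv] by auto
    moreover have "crown_of w = crown_of v"
      using adj_in_partner[OF a] crown_of_mem[OF v cv] unfolding crown_of_def by auto
    ultimately show "crown_of v = crown_of w \<and> (v \<in> left_side v \<longleftrightarrow> w \<notin> left_side w) \<and>
        rank_in (left_side v) (left_rep v) \<noteq> rank_in (left_side w) (left_rep w)"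
      using a crown_adj_iff_left_rep[OF v cv w cw]
        rank_in_eq_iff[OF finite_left_side left_rep_in_left_side[OF v cv]]
            left_rep_in_left_side[OF w cw]
      by auto
  next
    assume "crown_of v = crown_of w \<and> (v \<in> left_side v \<longleftrightarrow> w \<notin> left_side w) \<and>
        rank_in (left_side v) (left_rep v) \<noteq> rank_in (left_side w) (left_rep w)"
    then show "adj X v w"
      using crown_adj_iff_left_rep[OF v cv w cw] by (auto simp: left_side_def)
  qed
  finally show ?thesis by simp
qed

lemma template_labelling_template_label:
  assumes ct_cnt: "card clique_vertices = g * (r + 1)" and nn: "n = (g + 2 * h) * (r + 1)"
  shows "template_labelling (r + 1) X g h template_label"
proof -
  have un: "clique_vertices \<union> crown_vertices = {..<n}" "clique_vertices \<inter> crown_vertices = {}"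
    unfolding clique_vertices_def crown_vertices_def by auto
  have "card clique_vertices + card crown_vertices = n"
    using card_Un_disjoint[of clique_vertices crown_vertices] un
    by (simp add: clique_vertices_def crown_vertices_def)
  then have cr: "card crown_vertices = h * (2 * (r + 1))" using ct_cnt nn
    by (simp add: algebra_simps)
  have "card clique_leaders * (r + 1) = g * (r + 1)" using card_clique_leaders ct_cnt by simp
  then have g: "card clique_leaders = g" using mult_cancel2[of "card clique_leaders" "r + 1" g]
    by simp
  have "card crown_leaders * (2 * (r + 1)) = h * (2 * (r + 1))" using card_crown_leaders cr by simp
  then have h: "card crown_leaders = h" using mult_cancel2[of "card crown_leaders" "2 * (r + 1)" h]
    by simp
  have sub: "template_label ` {..<n} \<subseteq> template_vertices (r + 1) g h"
    using template_label_in[OF _ g h] by auto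
  have "card (template_label ` {..<n}) = n" using card_image[OF inj_on_template_label] by simp
  also have "n = card (template_vertices (r + 1) g h)"
    using nn card_template_vertices[of "r + 1" g h] by (simp add: algebra_simps)
  finally have "template_label ` {..<n} = template_vertices (r + 1) g h"
    using card_subset_eq[OF finite_template_vertices sub] by simp
  then have "bij_betw template_label {..<n} (template_vertices (r + 1) g h)"
    using inj_on_template_label by (simp add: bij_betw_def)
  then show ?thesis unfolding template_labelling_def using adj_iff_template_adj by auto
qed

lemma sum_block_degree: "(\<Sum>i<n. block_degree X cls i) = r * card clique_vertices"
proof -
  have "(\<Sum>i<n. block_degree X cls i) = (\<Sum>i<n. if clique_vertex i then r else 0)"
    using block_degree_eq by simp
  also have "\<dots> = card {i. i < n \<and> clique_vertex i} * r" by (simp add: sum_if_card)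
  finally show ?thesis by (simp add: clique_vertices_def)
qed

end

section \<open>Cospectral mates of the model graph\<close>

lemma cospectral_template_labelling:
  assumes r: "r \<ge> 2" and SG: "simple_graph G" and LG: "template_labelling (r + 1) G a b \<phi>"
    and SH: "simple_graph H" and sp: "spec_Q H = spec_Q G"
  obtains \<psi> where "template_labelling (r + 1) H a b \<psi>"
proof -
  have PG: "common_nbr_pattern G r (template_block \<circ> \<phi>)"
    by (rule labelling_common_nbr_pattern[OF LG]) simp
  interpret G: common_nbr_graph G r "template_block \<circ> \<phi>"
    using SG r PG by unfold_locales
  have RG: "regular_graph G r" using G.degree_eq by (simp add: regular_graph_def)
  have RH: "regular_graph H r" by (rule cospectral_regular[OF SH SG RG sp])
  have NG: "\<And>i j. i < nverts G \<Longrightarrow> j < nverts G \<Longrightarrow> annihilator_entry G r i j = 0"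
    by (rule common_nbr_pattern_annihilator_zero[OF PG r])
  have "annihilator_entry H r i j = 0" if "i < nverts H" "j < nverts H" for i j
    using cospectral_annihilator_zero[OF SH RH RG sp NG that] .
  then obtain cls :: "nat \<Rightarrow> nat set" where PH: "common_nbr_pattern H r cls"
    by (rule annihilator_zero_common_nbr_pattern[OF SH RH r])
  interpret H: common_nbr_graph H r cls
    using SH r PH by unfold_locales
  have "(r - 1) * (r * card H.clique_vertices) = closed_walks3 H"
    using H.closed_walks3_eq H.sum_block_degree by simp
  also have "\<dots> = closed_walks3 G" by (rule cospectral_closed_walks3[OF RH RG sp])
  also have "\<dots> = (r - 1) * (r * (a * (r + 1)))"
    using G.closed_walks3_eq labelling_block_degree_sum[OF LG] by simp
  finally have "card H.clique_vertices = a * (r + 1)" using r by auto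
  moreover have "nverts H = (a + 2 * b) * (r + 1)"
    using cospectral_nverts[OF sp] labelling_nverts[OF LG] by simp
  ultimately show thesis using H.template_labelling_template_label that by blast
qed

theorem mainTheorem5:
  fixes r g h :: nat
  assumes "r \<ge> 2" and "g + h \<ge> 1"
  shows "DQS (disjoint_union (copies g (complete_graph (r + 1)))
                             (copies h (crown_graph (r + 1))))"
proof -
  define G where
    "G = disjoint_union (copies g (complete_graph (r + 1))) (copies h (crown_graph (r + 1)))"
  obtain \<phi> where LG: "template_labelling (r + 1) G g h \<phi>"
    using clique_crown_union_template_labelling unfolding G_def by blast
  have SG: "simple_graph G" unfolding G_def by (rule simple_clique_crown_union)
  show ?thesis unfolding DQS_def G_def[symmetric]
  proof (intro allI impI)
    fix H assume "simple_graph H" "spec_Q H = spec_Q G"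
    then obtain \<psi> where "template_labelling (r + 1) H g h \<psi>"
      using cospectral_template_labelling[OF assms(1) SG LG] by blast
    then show "isomorphic H G" using LG by (rule template_labelling_isomorphic)
  qed
qed

end
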